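(* Let $f,g\colon X\to Y$ be continuous maps, $R$ a commutative ring with unit, and $\mathcal{J}(f,g)\subset H^*(X;R)$ the image of $f^*-g^*\colon H^*(Y;R)\to H^*(X;R)$. Then $\mathrm{l.c.p.}\,\mathcal{J}(f,g)\leq \mathrm{D}(f,g)$.
   Context: $H^*(-;R)$ denotes (singular) cohomology with coefficients in $R$. For a subset $\mathcal{J}\subset H^*(X;R)$ (not necessarily a subring), $\mathrm{l.c.p.}\,\mathcal{J}$ is the least integer $k$ such that every cup product $u_0\smile\cdots\smile u_k$ of $k+1$ elements of $\mathcal{J}$ is zero in $H^*(X;R)$. For continuous maps $f,g\colon X\to Y$, the homotopic distance $\mathrm{D}(f,g)$ is the least integer $n\geq 0$ such that there is an open cover $\{U_0,\dots,U_n\}$ of $X$ with $f|_{U_j}\simeq g|_{U_j}$ for all $j$ ($\infty$ if none exists). *)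

theory Defs
  imports "HOL-Homology.Homology" "HOL-Library.Extended_Nat"
begin

text \<open>A (total) cochain assigns to each degree n and
  each singular n-simplex of X an element of 'r; it vanishes on non-simplices and
  is nonzero only in finitely many degrees (H^* is the direct sum of the H^n).\<close>

type_synonym ('a,'r) cochain = "nat \<Rightarrow> ((nat \<Rightarrow> real) \<Rightarrow> 'a) \<Rightarrow> 'r"

definition cochains :: "'a topology \<Rightarrow> ('a,'r::comm_ring_1) cochain set" where
  "cochains X = {c. (\<forall>n \<sigma>. \<not> singular_simplex n X \<sigma> \<longrightarrow> c n \<sigma> = 0)
                    \<and> finite {n. \<exists>\<sigma>. c n \<sigma> \<noteq> 0}}"

definition cobd :: "'a topology \<Rightarrow> ('a,'r::comm_ring_1) cochain \<Rightarrow> ('a,'r) cochain" where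
  "cobd X c = (\<lambda>n \<sigma>. if singular_simplex n X \<sigma> \<and> 0 < n
        then (\<Sum>k\<le>n. (-1) ^ k * c (n - 1) (singular_face n k \<sigma>)) else 0)"

definition czero :: "('a,'r::comm_ring_1) cochain" where
  "czero = (\<lambda>n \<sigma>. 0)"

definition cminus :: "('a,'r::comm_ring_1) cochain \<Rightarrow> ('a,'r) cochain \<Rightarrow> ('a,'r) cochain" where
  "cminus a b = (\<lambda>n \<sigma>. a n \<sigma> - b n \<sigma>)"

definition cocycles :: "'a topology \<Rightarrow> ('a,'r::comm_ring_1) cochain set" where
  "cocycles X = {c \<in> cochains X. cobd X c = czero}"

definition coboundaries :: "'a topology \<Rightarrow> ('a,'r::comm_ring_1) cochain set" where
  "coboundaries X = cobd X ` cochains X"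

definition front_face :: "nat \<Rightarrow> ((nat \<Rightarrow> real) \<Rightarrow> 'a) \<Rightarrow> (nat \<Rightarrow> real) \<Rightarrow> 'a" where
  "front_face p \<sigma> = simplex_map p \<sigma> (oriented_simplex p (\<lambda>j i. if i = j then 1 else 0))"

definition back_face :: "nat \<Rightarrow> nat \<Rightarrow> ((nat \<Rightarrow> real) \<Rightarrow> 'a) \<Rightarrow> (nat \<Rightarrow> real) \<Rightarrow> 'a" where
  "back_face p q \<sigma> = simplex_map q \<sigma> (oriented_simplex q (\<lambda>j i. if i = p + j then 1 else 0))"

definition cup :: "'a topology \<Rightarrow> ('a,'r::comm_ring_1) cochain \<Rightarrow> ('a,'r) cochain \<Rightarrow> ('a,'r) cochain" where
  "cup X a b = (\<lambda>n \<sigma>. if singular_simplex n X \<sigma>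
        then (\<Sum>p\<le>n. a p (front_face p \<sigma>) * b (n - p) (back_face p (n - p) \<sigma>)) else 0)"

definition pullback :: "'a topology \<Rightarrow> ('a \<Rightarrow> 'b) \<Rightarrow> ('b,'r::comm_ring_1) cochain \<Rightarrow> ('a,'r) cochain" where
  "pullback X f c = (\<lambda>n \<sigma>. if singular_simplex n X \<sigma> then c n (simplex_map n f \<sigma>) else 0)"

definition cclass :: "'a topology \<Rightarrow> ('a,'r::comm_ring_1) cochain \<Rightarrow> ('a,'r) cochain set" where
  "cclass X z = {z' \<in> cocycles X. cminus z' z \<in> coboundaries X}"

definition cohomology :: "'a topology \<Rightarrow> ('a,'r::comm_ring_1) cochain set set" where
  "cohomology X = cclass X ` cocycles X"

definition rep :: "('a,'r) cochain set \<Rightarrow> ('a,'r) cochain" where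
  "rep u = (SOME z. z \<in> u)"

definition cohom_zero :: "'a topology \<Rightarrow> ('a,'r::comm_ring_1) cochain set" where
  "cohom_zero X = cclass X czero"

definition cup_cohom :: "'a topology \<Rightarrow> ('a,'r::comm_ring_1) cochain set \<Rightarrow> ('a,'r) cochain set \<Rightarrow> ('a,'r) cochain set" where
  "cup_cohom X u v = cclass X (cup X (rep u) (rep v))"

fun cup_prod :: "'a topology \<Rightarrow> (nat \<Rightarrow> ('a,'r::comm_ring_1) cochain set) \<Rightarrow> nat \<Rightarrow> ('a,'r) cochain set" where
  "cup_prod X u 0 = u 0"
| "cup_prod X u (Suc k) = cup_cohom X (cup_prod X u k) (u (Suc k))"

definition cohom_map :: "'a topology \<Rightarrow> ('a \<Rightarrow> 'b) \<Rightarrow> ('b,'r::comm_ring_1) cochain set \<Rightarrow> ('a,'r) cochain set" where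
  "cohom_map X f v = cclass X (pullback X f (rep v))"

definition Jfg :: "'a topology \<Rightarrow> 'b topology \<Rightarrow> ('a \<Rightarrow> 'b) \<Rightarrow> ('a \<Rightarrow> 'b) \<Rightarrow> ('a,'r::comm_ring_1) cochain set set" where
  "Jfg X Y f g = (\<lambda>v. cclass X (cminus (rep (cohom_map X f v)) (rep (cohom_map X g v)))) ` cohomology Y"

definition lcp :: "'a topology \<Rightarrow> ('a,'r::comm_ring_1) cochain set set \<Rightarrow> enat" where
  "lcp X J = (if \<exists>k. \<forall>u. (\<forall>i\<le>k. u i \<in> J) \<longrightarrow> cup_prod X u k = cohom_zero X
              then enat (LEAST k. \<forall>u. (\<forall>i\<le>k. u i \<in> J) \<longrightarrow> cup_prod X u k = cohom_zero X)
              else \<infinity>)"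

definition good_cover :: "'a topology \<Rightarrow> 'b topology \<Rightarrow> ('a \<Rightarrow> 'b) \<Rightarrow> ('a \<Rightarrow> 'b) \<Rightarrow> nat \<Rightarrow> bool" where
  "good_cover X Y f g n = (\<exists>U :: nat \<Rightarrow> 'a set.
      (\<forall>j\<le>n. openin X (U j)) \<and> (\<Union>j\<le>n. U j) = topspace X \<and>
      (\<forall>j\<le>n. homotopic_with (\<lambda>h. True) (subtopology X (U j)) Y f g))"

definition hdist :: "'a topology \<Rightarrow> 'b topology \<Rightarrow> ('a \<Rightarrow> 'b) \<Rightarrow> ('a \<Rightarrow> 'b) \<Rightarrow> enat" where
  "hdist X Y f g = (if \<exists>n. good_cover X Y f g n then enat (LEAST n. good_cover X Y f g n) else \<infinity>)"

end

theory Submission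
  imports Defs
begin

(* Let U_0, ..., U_n be an open cover of X with f and g homotopic on each U_j.  A homotopy on U_j
   yields, through a prism operator, a cochain homotopy between the pullbacks along f and g on
   simplices lying in U_j; hence every class in J(f,g) has a representative cocycle vanishing on
   U_j-small simplices.  For such representatives w_0, ..., w_n the Alexander-Whitney product
   w_0 \<smile> ... \<smile> w_n vanishes on every simplex that is small for some U_j, because all
   front and back faces of a simplex in U_j lie in U_j.  A cocycle vanishing on all simplices
   subordinate to an open cover is a coboundary: iterated barycentric subdivision makes every
   simplex small, and the chain homotopy between subdivision and the identity turns the cocycle
   into the coboundary of an explicit primitive. *)

section \<open>Evaluating cochains on chains\<close>

definition eval_cochain :: "('a,'r::comm_ring_1) cochain \<Rightarrow> nat \<Rightarrow> 'a chain \<Rightarrow> 'r" where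
  "eval_cochain c n x = (\<Sum>\<sigma>\<in>Poly_Mapping.keys x. of_int (poly_mapping.lookup x \<sigma>) * c n \<sigma>)"

lemma eval_cochain_superset:
  assumes "finite S" "Poly_Mapping.keys x \<subseteq> S"
  shows "eval_cochain c n x = (\<Sum>\<sigma>\<in>S. of_int (poly_mapping.lookup x \<sigma>) * c n \<sigma>)"
  unfolding eval_cochain_def by (rule sum.mono_neutral_left) (use assms in \<open>auto simp: in_keys_iff\<close>)

lemma eval_cochain_0 [simp]: "eval_cochain c n 0 = 0"
  by (simp add: eval_cochain_def)

lemma eval_cochain_frag_of [simp]: "eval_cochain c n (frag_of \<sigma>) = c n \<sigma>"
  by (simp add: eval_cochain_def keys_frag_of)

lemma eval_cochain_add: "eval_cochain c n (x + y) = eval_cochain c n x + eval_cochain c n y"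
  using keys_add[of x y]
  by (simp add: eval_cochain_superset[of "Poly_Mapping.keys x \<union> Poly_Mapping.keys y"]
      lookup_add sum.distrib distrib_right)

lemma eval_cochain_cmul: "eval_cochain c n (frag_cmul k x) = of_int k * eval_cochain c n x"
  using keys_cmul[of k x]
  by (simp add: eval_cochain_superset[of "Poly_Mapping.keys x"] sum_distrib_left mult.assoc)

lemma eval_cochain_diff: "eval_cochain c n (x - y) = eval_cochain c n x - eval_cochain c n y"
  using eval_cochain_add[of c n x "-y"] eval_cochain_cmul[of c n "-1" y] by simp

lemma eval_cochain_sum: "eval_cochain c n (sum g I) = (\<Sum>i\<in>I. eval_cochain c n (g i))"
  by (induction I rule: infinite_finite_induct) (auto simp: eval_cochain_add)

lemma eval_cochain_eq_0:
  "(\<And>\<sigma>. \<sigma> \<in> Poly_Mapping.keys x \<Longrightarrow> c n \<sigma> = 0) \<Longrightarrow> eval_cochain c n x = 0"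
  by (simp add: eval_cochain_def)

lemma eval_cochain_nonzero: "eval_cochain c n x \<noteq> 0 \<Longrightarrow> \<exists>\<sigma>. c n \<sigma> \<noteq> 0"
  using eval_cochain_eq_0 by blast

lemma additive_eq_eval_cochain:
  fixes \<phi> :: "'a chain \<Rightarrow> 'r::comm_ring_1"
  assumes "\<And>a b. \<phi> (a - b) = \<phi> a - \<phi> b"
  shows "\<phi> x = eval_cochain (\<lambda>_ \<tau>. \<phi> (frag_of \<tau>)) n x"
  using subset_UNIV
proof (induction x rule: frag_induction)
  case zero
  show ?case
    using assms[of 0 0] by simp
qed (simp_all add: assms eval_cochain_diff)

lemma eval_cochain_cobd:
  assumes "singular_chain (Suc n) X x"
  shows "eval_cochain (cobd X c) (Suc n) x = eval_cochain c n (chain_boundary (Suc n) x)"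
  using assms unfolding singular_chain_def
proof (induction x rule: frag_induction)
  case (one \<sigma>)
  then show ?case
    by (simp add: cobd_def chain_boundary_of eval_cochain_sum eval_cochain_cmul del: sum.atMost_Suc)
qed (auto simp: eval_cochain_diff chain_boundary_diff)

lemma eval_cochain_pullback:
  assumes "singular_chain n X x"
  shows "eval_cochain (pullback X f c) n x = eval_cochain c n (chain_map n f x)"
  using assms unfolding singular_chain_def
proof (induction x rule: frag_induction)
  case (one \<sigma>)
  then show ?case
    by (simp add: pullback_def)
qed (auto simp: eval_cochain_diff chain_map_diff)

lemma cobd_Suc_eq_eval_cochain:
  assumes "singular_simplex (Suc n) X \<sigma>"
  shows "cobd X c (Suc n) \<sigma> = eval_cochain c n (chain_boundary (Suc n) (frag_of \<sigma>))"
  using eval_cochain_cobd[of n X "frag_of \<sigma>" c] assms by (simp add: singular_chain_of)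

lemma chain_boundary_0 [simp]: "chain_boundary 0 c = 0"
  by (simp add: chain_boundary_def)

lemma cobd_cobd: "cobd X (cobd X c) = czero"
proof (intro ext)
  fix n \<sigma>
  show "cobd X (cobd X c) n \<sigma> = czero n \<sigma>"
  proof (cases "singular_simplex n X \<sigma> \<and> 1 < n")
    case True
    then obtain m where n: "n = Suc (Suc m)"
      by (metis less_imp_Suc_add plus_1_eq_Suc)
    have s: "singular_chain (Suc (Suc m)) X (frag_of \<sigma>)"
      using True n by (simp add: singular_chain_of)
    have "cobd X (cobd X c) n \<sigma>
          = eval_cochain c m (chain_boundary (Suc m) (chain_boundary (Suc (Suc m)) (frag_of \<sigma>)))"
      using True n singular_chain_boundary_alt[OF s]
      by (simp add: cobd_Suc_eq_eval_cochain eval_cochain_cobd del: chain_boundary_of)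
    then show ?thesis
      using chain_boundary_boundary_alt[OF s] by (simp add: czero_def)
  qed (auto simp: cobd_def czero_def)
qed

section \<open>Cochains, cocycles and cohomology classes\<close>

lemma cochainsD: "c \<in> cochains X \<Longrightarrow> \<not> singular_simplex n X \<sigma> \<Longrightarrow> c n \<sigma> = 0"
  by (simp add: cochains_def)

lemma cochainsI:
  assumes "\<And>n \<sigma>. \<not> singular_simplex n X \<sigma> \<Longrightarrow> c n \<sigma> = 0"
    and "\<And>n \<sigma>. c n \<sigma> \<noteq> 0 \<Longrightarrow> n \<in> D" "finite D"
  shows "c \<in> cochains X"
proof -
  have "{n. \<exists>\<sigma>. c n \<sigma> \<noteq> 0} \<subseteq> D"
    using assms(2) by blast
  with assms(1,3) show ?thesis
    unfolding cochains_def by (blast intro: finite_subset)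
qed

lemma finite_cochain_degrees: "c \<in> cochains X \<Longrightarrow> finite {n. \<exists>\<sigma>. c n \<sigma> \<noteq> 0}"
  by (simp add: cochains_def)

lemma cochains_degree_shift:
  assumes "c \<in> cochains Y"
    and "\<And>n \<sigma>. \<not> singular_simplex n X \<sigma> \<Longrightarrow> b n \<sigma> = 0"
    and "\<And>n \<sigma>. b n \<sigma> \<noteq> 0 \<Longrightarrow> \<exists>\<rho>. c (Suc n) \<rho> \<noteq> 0"
  shows "b \<in> cochains X"
proof (rule cochainsI[where D = "Suc -` {n. \<exists>\<sigma>. c n \<sigma> \<noteq> 0}"])
  show "finite (Suc -` {n. \<exists>\<sigma>. c n \<sigma> \<noteq> 0})"
    using finite_cochain_degrees[OF assms(1)] by (rule finite_vimageI) simp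
qed (use assms(2,3) in auto)

lemma czero_cochains [simp]: "czero \<in> cochains X"
  by (simp add: cochains_def czero_def)

lemma cminus_cochains:
  assumes "a \<in> cochains X" "b \<in> cochains X"
  shows "cminus a b \<in> cochains X"
proof (rule cochainsI[where D = "{n. \<exists>\<sigma>. a n \<sigma> \<noteq> 0} \<union> {n. \<exists>\<sigma>. b n \<sigma> \<noteq> 0}"])
  show "cminus a b n \<sigma> = 0" if "\<not> singular_simplex n X \<sigma>" for n \<sigma>
    using that assms by (simp add: cminus_def cochainsD)
qed (use finite_cochain_degrees[OF assms(1)] finite_cochain_degrees[OF assms(2)] in
    \<open>auto simp: cminus_def\<close>)

lemma cobd_cochains:
  assumes "c \<in> cochains X"
  shows "cobd X c \<in> cochains X"
proof (rule cochainsI[where D = "Suc ` {n. \<exists>\<sigma>. c n \<sigma> \<noteq> 0}"])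
  fix n \<sigma> assume "cobd X c n \<sigma> \<noteq> 0"
  then have n: "0 < n" and "(\<Sum>k\<le>n. (-1) ^ k * c (n - 1) (singular_face n k \<sigma>)) \<noteq> 0"
    by (auto simp: cobd_def split: if_splits)
  then obtain k where "(-1) ^ k * c (n - 1) (singular_face n k \<sigma>) \<noteq> 0"
    using sum.not_neutral_contains_not_neutral by blast
  then have "c (n - 1) (singular_face n k \<sigma>) \<noteq> 0"
    by auto
  with n show "n \<in> Suc ` {n. \<exists>\<sigma>. c n \<sigma> \<noteq> 0}"
    by (intro image_eqI[of _ _ "n - 1"]) auto
qed (simp_all add: cobd_def finite_cochain_degrees[OF assms])

lemma cminus_czero [simp]: "cminus a czero = a"
  by (simp add: cminus_def czero_def)

lemma cminus_self [simp]: "cminus a a = czero"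
  by (simp add: cminus_def czero_def)

lemma cminus_cancel_left [simp]: "cminus a (cminus a b) = b"
  by (simp add: cminus_def)

lemma cobd_cminus: "cobd X (cminus a b) = cminus (cobd X a) (cobd X b)"
  unfolding cobd_def cminus_def by (intro ext) (simp add: sum_subtractf right_diff_distrib)

lemma cobd_czero [simp]: "cobd X czero = czero"
  unfolding cobd_def czero_def by (intro ext) simp

lemma cobd_in_cocycles: "c \<in> cochains X \<Longrightarrow> cobd X c \<in> cocycles X"
  by (simp add: cocycles_def cobd_cochains cobd_cobd)

lemma coboundaries_cobd: "c \<in> cochains X \<Longrightarrow> cobd X c \<in> coboundaries X"
  by (simp add: coboundaries_def)

lemma coboundaries_cocycles: "b \<in> coboundaries X \<Longrightarrow> b \<in> cocycles X"
  by (auto simp: coboundaries_def cobd_in_cocycles)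

lemma coboundariesE:
  assumes "b \<in> coboundaries X"
  obtains c where "c \<in> cochains X" "b = cobd X c"
  using assms unfolding coboundaries_def by blast

lemma coboundaries_cminus:
  assumes "a \<in> coboundaries X" "b \<in> coboundaries X"
  shows "cminus a b \<in> coboundaries X"
proof -
  obtain x y where "x \<in> cochains X" "y \<in> cochains X" "a = cobd X x" "b = cobd X y"
    using assms by (metis coboundariesE)
  then show ?thesis
    by (simp add: cobd_cminus[symmetric] cminus_cochains coboundaries_cobd)
qed

lemma czero_coboundaries [simp]: "czero \<in> coboundaries X"
  using coboundaries_cobd[OF czero_cochains] by simp

lemma cocycles_cminus:
  "a \<in> cocycles X \<Longrightarrow> b \<in> cocycles X \<Longrightarrow> cminus a b \<in> cocycles X"
  by (auto simp: cocycles_def cobd_cminus cminus_cochains)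

lemma czero_cocycles [simp]: "czero \<in> cocycles X"
  by (simp add: cocycles_def)

lemma cclass_self: "z \<in> cocycles X \<Longrightarrow> z \<in> cclass X z"
  by (simp add: cclass_def)

lemma rep_in: "u \<noteq> {} \<Longrightarrow> rep u \<in> u"
  unfolding rep_def by (simp add: some_in_eq)

lemma rep_cclass:
  assumes "z \<in> cocycles X"
  shows "rep (cclass X z) \<in> cocycles X" "cminus (rep (cclass X z)) z \<in> coboundaries X"
proof -
  have "rep (cclass X z) \<in> cclass X z"
    using rep_in cclass_self[OF assms] by blast
  then show "rep (cclass X z) \<in> cocycles X" "cminus (rep (cclass X z)) z \<in> coboundaries X"
    unfolding cclass_def by simp_all
qed

lemma cclass_eq:
  assumes "z \<in> cocycles X" "w \<in> cocycles X" "cminus z w \<in> coboundaries X"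
  shows "cclass X z = cclass X w"
proof -
  have "cminus z' z \<in> coboundaries X \<longleftrightarrow> cminus z' w \<in> coboundaries X" for z'
  proof
    assume "cminus z' z \<in> coboundaries X"
    from coboundaries_cminus[OF this coboundaries_cminus[OF czero_coboundaries assms(3)]]
    show "cminus z' w \<in> coboundaries X" by (simp add: cminus_def czero_def)
  next
    assume "cminus z' w \<in> coboundaries X"
    from coboundaries_cminus[OF this assms(3)]
    show "cminus z' z \<in> coboundaries X" by (simp add: cminus_def)
  qed
  then show ?thesis
    unfolding cclass_def by blast
qed

lemma cclass_coboundary:
  "z \<in> coboundaries X \<Longrightarrow> cclass X z = cohom_zero X"
  unfolding cohom_zero_def by (rule cclass_eq) (simp_all add: coboundaries_cocycles)

section \<open>Front and back faces\<close>

definition shift_coords :: "nat \<Rightarrow> (nat \<Rightarrow> real) \<Rightarrow> nat \<Rightarrow> real" where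
  "shift_coords p x = (\<lambda>i. if p \<le> i then x (i - p) else 0)"

lemma front_face_eq: "front_face p \<sigma> = restrict \<sigma> (standard_simplex p)"
proof -
  have "(\<lambda>i. \<Sum>j\<le>p. (if i = j then 1 else 0) * x j) = x" if "x \<in> standard_simplex p" for x :: "nat \<Rightarrow> real"
  proof
    fix i
    show "(\<Sum>j\<le>p. (if i = j then 1 else 0) * x j) = x i"
    proof (cases "i \<le> p")
      case True
      then have "(\<Sum>j\<le>p. (if i = j then 1 else 0) * x j) = (\<Sum>j\<le>p. if j = i then x j else 0)"
        by (intro sum.cong) auto
      with True show ?thesis by simp
    next
      case False
      then have "(\<Sum>j\<le>p. (if i = j then 1 else 0) * x j) = 0"
        by (intro sum.neutral) auto
      with False that show ?thesis by (auto simp: standard_simplex_def)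
    qed
  qed
  then show ?thesis
    unfolding front_face_def simplex_map_def oriented_simplex_def
    by (intro restrict_ext) auto
qed

lemma shift_coords_in_standard_simplex:
  assumes "x \<in> standard_simplex q"
  shows "shift_coords p x \<in> standard_simplex (p + q)"
proof -
  have "(\<Sum>i\<le>p + q. shift_coords p x i) = (\<Sum>i\<le>q. x i)"
  proof -
    have "(\<Sum>i\<le>p + q. shift_coords p x i) = (\<Sum>i\<in>{..<p} \<union> {p..p+q}. shift_coords p x i)"
      by (rule sum.cong) auto
    also have "\<dots> = (\<Sum>i\<in>{..<p}. shift_coords p x i) + (\<Sum>i\<in>{p..p+q}. shift_coords p x i)"
      by (rule sum.union_disjoint) auto
    also have "(\<Sum>i\<in>{..<p}. shift_coords p x i) = 0"
      by (simp add: shift_coords_def)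
    also have "(\<Sum>i\<in>{p..p+q}. shift_coords p x i) = (\<Sum>i\<in>{0+p..q+p}. shift_coords p x i)"
      by (simp add: add.commute)
    also have "\<dots> = (\<Sum>i\<in>{0..q}. shift_coords p x (i + p))"
      by (rule sum.shift_bounds_cl_nat_ivl)
    also have "\<dots> = (\<Sum>i\<le>q. x i)"
      by (simp add: shift_coords_def atLeast0AtMost)
    finally show ?thesis by simp
  qed
  with assms show ?thesis
    by (auto simp: standard_simplex_def shift_coords_def)
qed

lemma back_face_eq: "back_face p q \<sigma> = restrict (\<sigma> \<circ> shift_coords p) (standard_simplex q)"
proof -
  have "(\<lambda>i. \<Sum>j\<le>q. (if i = p + j then 1 else 0) * x j) = shift_coords p x" if "x \<in> standard_simplex q" for x :: "nat \<Rightarrow> real"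
  proof
    fix i
    show "(\<Sum>j\<le>q. (if i = p + j then 1 else 0) * x j) = shift_coords p x i"
    proof (cases "p \<le> i \<and> i - p \<le> q")
      case True
      then have "(\<Sum>j\<le>q. (if i = p + j then 1 else 0) * x j) = (\<Sum>j\<le>q. if j = i - p then x j else 0)"
        by (intro sum.cong) auto
      with True show ?thesis by (simp add: shift_coords_def)
    next
      case False
      then have "(\<Sum>j\<le>q. (if i = p + j then 1 else 0) * x j) = 0"
        by (intro sum.neutral) auto
      with False that show ?thesis by (auto simp: shift_coords_def standard_simplex_def)
    qed
  qed
  then show ?thesis
    unfolding back_face_def simplex_map_def oriented_simplex_def
    by (intro restrict_ext) auto
qed

lemma singular_simplex_restrict_mono:
  assumes "singular_simplex n X \<sigma>" "p \<le> n"
  shows "singular_simplex p X (restrict \<sigma> (standard_simplex p))"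
proof -
  have "continuous_map (subtopology (powertop_real UNIV) (standard_simplex p)) X \<sigma>"
    using assms standard_simplex_mono[OF assms(2)] continuous_map_from_subtopology_mono
    unfolding singular_simplex_def by blast
  then have "continuous_map (subtopology (powertop_real UNIV) (standard_simplex p)) X (restrict \<sigma> (standard_simplex p))"
    by (rule continuous_map_eq) auto
  then show ?thesis by (simp add: singular_simplex_def)
qed

lemma singular_simplex_front_face:
  assumes "singular_simplex n X \<sigma>" "p \<le> n"
  shows "singular_simplex p X (front_face p \<sigma>)"
  unfolding front_face_eq using singular_simplex_restrict_mono[OF assms] .

lemma continuous_map_shift_coords:
  "continuous_map (subtopology (powertop_real UNIV) (standard_simplex q))
                  (subtopology (powertop_real UNIV) (standard_simplex (p + q))) (shift_coords p)"
proof -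
  have "continuous_map (powertop_real UNIV) euclideanreal (\<lambda>x. shift_coords p x i)" for i
    by (cases "p \<le> i") (auto simp: shift_coords_def intro: continuous_map_product_projection)
  then have "continuous_map (powertop_real UNIV) (powertop_real UNIV) (shift_coords p)"
    by (auto simp: continuous_map_componentwise_UNIV)
  then show ?thesis
    by (auto simp: continuous_map_in_subtopology shift_coords_in_standard_simplex intro: continuous_map_from_subtopology)
qed

lemma singular_simplex_back_face:
  assumes "singular_simplex n X \<sigma>" "n = p + q"
  shows "singular_simplex q X (back_face p q \<sigma>)"
proof -
  have "continuous_map (subtopology (powertop_real UNIV) (standard_simplex q)) X (\<sigma> \<circ> shift_coords p)"
    using continuous_map_compose[OF continuous_map_shift_coords] assms unfolding singular_simplex_def by blast
  then have "continuous_map (subtopology (powertop_real UNIV) (standard_simplex q)) X (back_face p q \<sigma>)"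
    unfolding back_face_eq by (rule continuous_map_eq) auto
  then show ?thesis by (simp add: singular_simplex_def back_face_eq)
qed

lemma front_face_image:
  assumes "p \<le> n" shows "front_face p \<sigma> ` standard_simplex p \<subseteq> \<sigma> ` standard_simplex n"
  using standard_simplex_mono[OF assms] by (auto simp: front_face_eq)

lemma back_face_image:
  assumes "n = p + q" shows "back_face p q \<sigma> ` standard_simplex q \<subseteq> \<sigma> ` standard_simplex n"
  using shift_coords_in_standard_simplex assms by (auto simp: back_face_eq)

lemma simplical_face_in_standard_simplex_Suc:
  "k \<le> Suc n \<Longrightarrow> x \<in> standard_simplex n \<Longrightarrow> simplical_face k x \<in> standard_simplex (Suc n)"
  using simplical_face_in_standard_simplex[of "Suc n" k x] by simp

lemma front_face_singular_face_low:
  assumes "k \<le> p" "p \<le> n"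
  shows "front_face p (singular_face (Suc n) k \<sigma>) = singular_face (Suc p) k (front_face (Suc p) \<sigma>)"
proof -
  have "x \<in> standard_simplex p \<Longrightarrow> simplical_face k x \<in> standard_simplex (Suc p)" for x
    using simplical_face_in_standard_simplex_Suc[of k p x] assms by simp
  moreover have "standard_simplex p \<subseteq> standard_simplex n"
    using assms standard_simplex_mono by blast
  ultimately show ?thesis
    unfolding front_face_eq singular_face_def by (intro ext) (auto simp: restrict_def subset_iff)
qed

lemma back_face_singular_face_low:
  assumes "k \<le> p" "p \<le> n"
  shows "back_face p (n - p) (singular_face (Suc n) k \<sigma>) = back_face (Suc p) (n - p) \<sigma>"
proof -
  have "simplical_face k (shift_coords p x) = shift_coords (Suc p) x" for x
    using assms by (auto simp: simplical_face_def shift_coords_def fun_eq_iff)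
  moreover have "x \<in> standard_simplex (n - p) \<Longrightarrow> shift_coords p x \<in> standard_simplex n" for x
    using shift_coords_in_standard_simplex[of x "n - p" p] assms by simp
  ultimately show ?thesis
    unfolding back_face_eq singular_face_def by (intro ext) (auto simp: restrict_def subset_iff)
qed

lemma simplical_face_beyond: "p < k \<Longrightarrow> x \<in> standard_simplex p \<Longrightarrow> simplical_face k x = x"
  by (auto simp: simplical_face_def standard_simplex_def fun_eq_iff)

lemma front_face_singular_face_high:
  assumes "p < k" "p \<le> n"
  shows "front_face p (singular_face (Suc n) k \<sigma>) = front_face p \<sigma>"
proof -
  have "standard_simplex p \<subseteq> standard_simplex n"
    using assms standard_simplex_mono by blast
  then show ?thesis
    unfolding front_face_eq singular_face_def using simplical_face_beyond[OF assms(1)]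
    by (intro ext) (auto simp: restrict_def subset_iff)
qed

lemma back_face_singular_face_high:
  assumes "p < k" "k \<le> Suc n" "p \<le> n"
  shows "back_face p (n - p) (singular_face (Suc n) k \<sigma>)
       = singular_face (Suc (n - p)) (k - p) (back_face p (Suc (n - p)) \<sigma>)"
proof -
  have "shift_coords p (simplical_face (k - p) x) = simplical_face k (shift_coords p x)" for x
    using assms by (auto simp: simplical_face_def shift_coords_def fun_eq_iff)
  moreover have "x \<in> standard_simplex (n - p) \<Longrightarrow> shift_coords p x \<in> standard_simplex n" for x
    using shift_coords_in_standard_simplex[of x "n - p" p] assms by simp
  moreover have "x \<in> standard_simplex (n - p) \<Longrightarrow> simplical_face (k - p) x \<in> standard_simplex (Suc (n - p))" for x
    using simplical_face_in_standard_simplex_Suc[of "k - p" "n - p" x] assms by simp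
  ultimately show ?thesis
    unfolding back_face_eq singular_face_def by (intro ext) (auto simp: restrict_def subset_iff)
qed

lemma singular_face_last_front_face: "singular_face (Suc p) (Suc p) (front_face (Suc p) \<sigma>) = front_face p \<sigma>"
proof -
  have "standard_simplex p \<subseteq> standard_simplex (Suc p)"
    using standard_simplex_mono by simp
  then show ?thesis
    unfolding front_face_eq singular_face_def using simplical_face_beyond[of p "Suc p"]
    by (intro ext) (auto simp: restrict_def subset_iff)
qed

lemma singular_face_first_back_face: "singular_face (Suc q) 0 (back_face p (Suc q) \<sigma>) = back_face (Suc p) q \<sigma>"
proof -
  have "shift_coords p (simplical_face 0 x) = shift_coords (Suc p) x" for x
    by (auto simp: simplical_face_def shift_coords_def fun_eq_iff Suc_diff_Suc)
  moreover have "x \<in> standard_simplex q \<Longrightarrow> simplical_face 0 x \<in> standard_simplex (Suc q)" for x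
    using simplical_face_in_standard_simplex_Suc[of 0 q x] by simp
  ultimately show ?thesis
    unfolding back_face_eq singular_face_def by (intro ext) (auto simp: restrict_def subset_iff)
qed

section \<open>Cup products of cochains\<close>

definition csign :: "('a,'r::comm_ring_1) cochain \<Rightarrow> ('a,'r) cochain" where
  "csign a = (\<lambda>n \<sigma>. (-1) ^ n * a n \<sigma>)"

lemma sum_atMost_add_Suc:
  "(\<Sum>k\<le>p + Suc q. f k) = (\<Sum>k\<le>p. f k) + (\<Sum>j\<le>q. f (Suc (p + j)))"
  by (induction q) (simp_all add: add.assoc)

lemma cobd_front_face:
  assumes "singular_simplex n X \<sigma>" "p < n"
  shows "cobd X a (Suc p) (front_face (Suc p) \<sigma>)
       = (\<Sum>k\<le>p. (-1) ^ k * a p (singular_face (Suc p) k (front_face (Suc p) \<sigma>))) + (-1) ^ Suc p * a p (front_face p \<sigma>)"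
  using singular_simplex_front_face[OF assms(1), of "Suc p"] assms(2)
  by (simp add: cobd_def singular_face_last_front_face)

lemma cobd_back_face:
  assumes "singular_simplex (p + Suc q) X \<sigma>"
  shows "cobd X b (Suc q) (back_face p (Suc q) \<sigma>)
       = b q (back_face (Suc p) q \<sigma>)
         + (\<Sum>j\<le>q. (-1) ^ Suc j * b q (singular_face (Suc q) (Suc j) (back_face p (Suc q) \<sigma>)))"
  using singular_simplex_back_face[OF assms refl]
  by (simp add: cobd_def sum.atMost_Suc_shift singular_face_first_back_face del: sum.atMost_Suc)

lemma cup_singular_faces_split:
  fixes a b :: "('a,'r::comm_ring_1) cochain"
  assumes "p \<le> m"
  shows "(\<Sum>k\<le>Suc m. (-1) ^ k * (a p (front_face p (singular_face (Suc m) k \<sigma>))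
                                  * b (m - p) (back_face p (m - p) (singular_face (Suc m) k \<sigma>))))
       = (\<Sum>k\<le>p. (-1) ^ k * a p (singular_face (Suc p) k (front_face (Suc p) \<sigma>)))
           * b (m - p) (back_face (Suc p) (m - p) \<sigma>)
         + (-1) ^ p * a p (front_face p \<sigma>)
           * (\<Sum>j\<le>m - p. (-1) ^ Suc j * b (m - p)
                (singular_face (Suc (m - p)) (Suc j) (back_face p (Suc (m - p)) \<sigma>)))"
proof -
  define T where "T k = (-1) ^ k * (a p (front_face p (singular_face (Suc m) k \<sigma>))
                          * b (m - p) (back_face p (m - p) (singular_face (Suc m) k \<sigma>)))" for k
  have "Suc m = p + Suc (m - p)"
    using assms by simp
  then have "(\<Sum>k\<le>Suc m. T k) = (\<Sum>k\<le>p. T k) + (\<Sum>j\<le>m - p. T (Suc (p + j)))"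
    by (simp only: sum_atMost_add_Suc)
  also have "(\<Sum>k\<le>p. T k) = (\<Sum>k\<le>p. (-1) ^ k * a p (singular_face (Suc p) k (front_face (Suc p) \<sigma>)))
                                * b (m - p) (back_face (Suc p) (m - p) \<sigma>)"
    unfolding T_def sum_distrib_right using assms
    by (intro sum.cong refl) (simp add: front_face_singular_face_low back_face_singular_face_low mult.assoc)
  also have "(\<Sum>j\<le>m - p. T (Suc (p + j))) = (-1) ^ p * a p (front_face p \<sigma>)
           * (\<Sum>j\<le>m - p. (-1) ^ Suc j * b (m - p)
                (singular_face (Suc (m - p)) (Suc j) (back_face p (Suc (m - p)) \<sigma>)))"
    unfolding T_def sum_distrib_left using assms
    by (intro sum.cong refl) (simp add: front_face_singular_face_high back_face_singular_face_high power_add mult_ac)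
  finally show ?thesis
    by (simp only: T_def)
qed

lemma cobd_cup_simplex:
  fixes a b :: "('a,'r::comm_ring_1) cochain"
  assumes \<sigma>: "singular_simplex (Suc m) X \<sigma>"
  shows "cobd X (cup X a b) (Suc m) \<sigma> = cup X (cobd X a) b (Suc m) \<sigma> + cup X (csign a) (cobd X b) (Suc m) \<sigma>"
proof -
  have faces: "singular_simplex m X (singular_face (Suc m) k \<sigma>)" if "k \<le> Suc m" for k
    using singular_simplex_singular_face[OF \<sigma> _ that] by simp
  have \<sigma>': "singular_simplex (p + Suc (m - p)) X \<sigma>" if "p \<le> m" for p
    using \<sigma> that by simp
  have "cobd X (cup X a b) (Suc m) \<sigma>
      = (\<Sum>p\<le>m. \<Sum>k\<le>Suc m. (-1) ^ k * (a p (front_face p (singular_face (Suc m) k \<sigma>))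
                                  * b (m - p) (back_face p (m - p) (singular_face (Suc m) k \<sigma>))))"
    using \<sigma> faces
    by (simp add: cobd_def cup_def sum_distrib_left del: sum.atMost_Suc) (rule sum.swap)
  moreover have "cup X (cobd X a) b (Suc m) \<sigma>
      = (\<Sum>p\<le>m. cobd X a (Suc p) (front_face (Suc p) \<sigma>) * b (m - p) (back_face (Suc p) (m - p) \<sigma>))"
    using \<sigma> by (simp add: cup_def sum.atMost_Suc_shift cobd_def del: sum.atMost_Suc)
  moreover have "cup X (csign a) (cobd X b) (Suc m) \<sigma>
      = (\<Sum>p\<le>m. csign a p (front_face p \<sigma>) * cobd X b (Suc m - p) (back_face p (Suc m - p) \<sigma>))"
    using \<sigma> by (simp add: cup_def cobd_def del: sum.atMost_Suc_shift)
  moreover have "\<dots> = (\<Sum>p\<le>m. (-1) ^ p * a p (front_face p \<sigma>)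
                                * cobd X b (Suc (m - p)) (back_face p (Suc (m - p)) \<sigma>))"
    by (intro sum.cong refl) (simp add: Suc_diff_le csign_def)
  ultimately show ?thesis
    using \<sigma> \<sigma>'
    by (simp add: cup_singular_faces_split cobd_front_face cobd_back_face sum.distrib[symmetric]
        algebra_simps del: sum.atMost_Suc)
qed

definition cplus :: "('a,'r::comm_ring_1) cochain \<Rightarrow> ('a,'r) cochain \<Rightarrow> ('a,'r) cochain" where
  "cplus a b = (\<lambda>n \<sigma>. a n \<sigma> + b n \<sigma>)"

lemma cobd_cup:
  fixes a b :: "('a,'r::comm_ring_1) cochain"
  shows "cobd X (cup X a b) = cplus (cup X (cobd X a) b) (cup X (csign a) (cobd X b))"
proof (intro ext)
  fix n \<sigma>
  show "cobd X (cup X a b) n \<sigma> = cplus (cup X (cobd X a) b) (cup X (csign a) (cobd X b)) n \<sigma>"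
  proof (cases "singular_simplex n X \<sigma> \<and> 0 < n")
    case True
    then obtain m where "n = Suc m" using gr0_conv_Suc by blast
    with True cobd_cup_simplex show ?thesis by (simp add: cplus_def)
  next
    case False
    then show ?thesis by (auto simp: cplus_def cobd_def cup_def)
  qed
qed

lemma cup_czero_left [simp]: "cup X czero b = czero"
  unfolding cup_def czero_def by (intro ext) simp

lemma cup_czero_right [simp]: "cup X a czero = czero"
  unfolding cup_def czero_def by (intro ext) simp

lemma cplus_czero [simp]: "cplus a czero = a" "cplus czero a = a"
  by (simp_all add: cplus_def czero_def)

lemma csign_csign [simp]: "csign (csign a) = a"
  by (simp add: csign_def power_mult_distrib[symmetric] flip: power_add mult.assoc)

lemma cobd_csign:
  assumes "cobd X a = czero"
  shows "cobd X (csign a) = czero"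
proof (intro ext)
  fix n \<sigma>
  have z: "cobd X a n \<sigma> = 0" using assms by (simp add: czero_def)
  show "cobd X (csign a) n \<sigma> = czero n \<sigma>"
  proof (cases "singular_simplex n X \<sigma> \<and> 0 < n")
    case True
    have "cobd X (csign a) n \<sigma> = (\<Sum>k\<le>n. (-1) ^ k * ((-1) ^ (n - 1) * a (n - 1) (singular_face n k \<sigma>)))"
      using True by (simp add: cobd_def csign_def)
    also have "\<dots> = (-1) ^ (n - 1) * (\<Sum>k\<le>n. (-1) ^ k * a (n - 1) (singular_face n k \<sigma>))"
      by (simp add: sum_distrib_left mult_ac)
    also have "\<dots> = (-1) ^ (n - 1) * cobd X a n \<sigma>"
      using True by (simp add: cobd_def)
    finally show ?thesis using z by (simp add: czero_def)
  next
    case False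
    then show ?thesis by (auto simp: cobd_def czero_def)
  qed
qed

lemma cobd_cup_right_cocycle:
  "cobd X b = czero \<Longrightarrow> cobd X (cup X a b) = cup X (cobd X a) b"
  by (simp add: cobd_cup)

lemma cobd_cup_left_cocycle:
  "cobd X a = czero \<Longrightarrow> cobd X (cup X (csign a) g) = cup X a (cobd X g)"
  by (simp add: cobd_cup cobd_csign)

lemma minus_one_power_mult_eq_0_iff: "((-1::'r::comm_ring_1) ^ n * x = 0) = (x = 0)"
proof
  assume "(-1::'r) ^ n * x = 0"
  then have "(-1) ^ n * ((-1::'r) ^ n * x) = 0" by simp
  moreover have "(-1) ^ n * ((-1::'r) ^ n * x) = x"
    by (simp add: mult.assoc[symmetric] power_mult_distrib[symmetric])
  ultimately show "x = 0" by simp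
qed simp

lemma csign_cochains: "a \<in> cochains X \<Longrightarrow> csign a \<in> cochains X"
  unfolding cochains_def csign_def by (simp add: minus_one_power_mult_eq_0_iff)

lemma cup_cochains:
  assumes "a \<in> cochains X" "b \<in> cochains X"
  shows "cup X a b \<in> cochains X"
proof -
  let ?A = "{n. \<exists>\<sigma>. a n \<sigma> \<noteq> 0}" and ?B = "{n. \<exists>\<sigma>. b n \<sigma> \<noteq> 0}"
  have "{n. \<exists>\<sigma>. cup X a b n \<sigma> \<noteq> 0} \<subseteq> (\<lambda>(p,q). p + q) ` (?A \<times> ?B)"
  proof
    fix n assume "n \<in> {n. \<exists>\<sigma>. cup X a b n \<sigma> \<noteq> 0}"
    then obtain \<sigma> where "cup X a b n \<sigma> \<noteq> 0" by auto
    then have "(\<Sum>p\<le>n. a p (front_face p \<sigma>) * b (n - p) (back_face p (n - p) \<sigma>)) \<noteq> 0"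
      by (auto simp: cup_def split: if_splits)
    then obtain p where p: "p \<in> {..n}" "a p (front_face p \<sigma>) * b (n - p) (back_face p (n - p) \<sigma>) \<noteq> 0"
      using sum.not_neutral_contains_not_neutral by blast
    then have "a p (front_face p \<sigma>) \<noteq> 0" "b (n - p) (back_face p (n - p) \<sigma>) \<noteq> 0"
      by auto
    then have "(p, n - p) \<in> ?A \<times> ?B" by blast
    moreover have "n = (\<lambda>(p,q). p + q) (p, n - p)" using p by simp
    ultimately show "n \<in> (\<lambda>(p,q). p + q) ` (?A \<times> ?B)" by (rule rev_image_eqI)
  qed
  moreover have "finite ((\<lambda>(p,q). p + q) ` (?A \<times> ?B))"
    using assms by (simp add: cochains_def)
  ultimately have "finite {n. \<exists>\<sigma>. cup X a b n \<sigma> \<noteq> 0}"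
    by (rule finite_subset)
  moreover have "\<forall>n \<sigma>. \<not> singular_simplex n X \<sigma> \<longrightarrow> cup X a b n \<sigma> = 0"
    by (simp add: cup_def)
  ultimately show ?thesis
    unfolding cochains_def by blast
qed

lemma cup_cocycles:
  assumes "a \<in> cocycles X" "b \<in> cocycles X"
  shows "cup X a b \<in> cocycles X"
  using assms cup_cochains cobd_cup_right_cocycle by (fastforce simp: cocycles_def)

lemma cplus_cochains: "a \<in> cochains X \<Longrightarrow> b \<in> cochains X \<Longrightarrow> cplus a b \<in> cochains X"
proof -
  assume a: "a \<in> cochains X" and b: "b \<in> cochains X"
  have "cplus a b = cminus a (cminus czero b)" by (simp add: cplus_def cminus_def czero_def)
  then show ?thesis using a b by (simp add: cminus_cochains)
qed

lemma cobd_cplus: "cobd X (cplus a b) = cplus (cobd X a) (cobd X b)"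
  unfolding cobd_def cplus_def by (intro ext) (simp add: sum.distrib distrib_left)

lemma cminus_cup_cup:
  "cminus (cup X R U) (cup X W w) = cplus (cup X (cminus R W) U) (cup X W (cminus U w))"
  unfolding cup_def cminus_def cplus_def
  by (intro ext) (simp add: sum.distrib[symmetric] sum_subtractf[symmetric] algebra_simps)

lemma cup_cohomologous:
  assumes W: "W \<in> cocycles X" and R: "R \<in> cocycles X" and RW: "cminus R W \<in> coboundaries X"
      and w: "w \<in> cocycles X" and U: "U \<in> cocycles X" and Uw: "cminus U w \<in> coboundaries X"
  shows "cminus (cup X R U) (cup X W w) \<in> coboundaries X"
proof -
  obtain \<beta> where \<beta>: "\<beta> \<in> cochains X" "cminus R W = cobd X \<beta>"
    using RW by (rule coboundariesE)
  obtain \<gamma> where \<gamma>: "\<gamma> \<in> cochains X" "cminus U w = cobd X \<gamma>"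
    using Uw by (rule coboundariesE)
  have cU: "cobd X U = czero" and cW: "cobd X W = czero"
    using U W by (auto simp: cocycles_def)
  have "cminus (cup X R U) (cup X W w) = cplus (cup X (cobd X \<beta>) U) (cup X W (cobd X \<gamma>))"
    by (simp add: cminus_cup_cup \<beta> \<gamma>)
  also have "\<dots> = cobd X (cplus (cup X \<beta> U) (cup X (csign W) \<gamma>))"
    by (simp add: cobd_cplus cobd_cup_right_cocycle[OF cU] cobd_cup_left_cocycle[OF cW])
  finally show ?thesis
    using \<beta> \<gamma> U W
    by (simp add: coboundaries_cobd cplus_cochains cup_cochains csign_cochains cocycles_def)
qed

lemma cup_cohom_cclass:
  assumes "z \<in> cocycles X" "w \<in> cocycles X"
  shows "cup_cohom X (cclass X z) (cclass X w) = cclass X (cup X z w)"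
  unfolding cup_cohom_def
  using rep_cclass[OF assms(1)] rep_cclass[OF assms(2)] assms
  by (intro cclass_eq cup_cocycles cup_cohomologous) auto

section \<open>Cochains vanishing on small simplices\<close>

definition vanishes_on :: "'a topology \<Rightarrow> 'a set \<Rightarrow> ('a,'r::comm_ring_1) cochain \<Rightarrow> bool" where
  "vanishes_on X V c \<longleftrightarrow>
     (\<forall>n \<sigma>. singular_simplex n X \<sigma> \<and> \<sigma> ` standard_simplex n \<subseteq> V \<longrightarrow> c n \<sigma> = 0)"

lemma vanishes_onD:
  "vanishes_on X V c \<Longrightarrow> singular_simplex n X \<sigma> \<Longrightarrow> \<sigma> ` standard_simplex n \<subseteq> V \<Longrightarrow> c n \<sigma> = 0"
  unfolding vanishes_on_def by blast

lemma vanishes_on_cup_left: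
  assumes "vanishes_on X V a"
  shows "vanishes_on X V (cup X a b)"
  unfolding vanishes_on_def
proof (intro allI impI)
  fix n \<sigma> assume \<sigma>: "singular_simplex n X \<sigma> \<and> \<sigma> ` standard_simplex n \<subseteq> V"
  have "a p (front_face p \<sigma>) = 0" if "p \<le> n" for p
  proof (rule vanishes_onD[OF assms])
    show "singular_simplex p X (front_face p \<sigma>)"
      using \<sigma> that singular_simplex_front_face by blast
    show "front_face p \<sigma> ` standard_simplex p \<subseteq> V"
      using \<sigma> front_face_image[OF that, of \<sigma>] by blast
  qed
  then show "cup X a b n \<sigma> = 0"
    by (simp add: cup_def)
qed

lemma vanishes_on_cup_right:
  assumes "vanishes_on X V b"
  shows "vanishes_on X V (cup X a b)"
  unfolding vanishes_on_def
proof (intro allI impI)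
  fix n \<sigma> assume \<sigma>: "singular_simplex n X \<sigma> \<and> \<sigma> ` standard_simplex n \<subseteq> V"
  have "b (n - p) (back_face p (n - p) \<sigma>) = 0" if "p \<le> n" for p
  proof (rule vanishes_onD[OF assms])
    have n: "n = p + (n - p)"
      using that by simp
    show "singular_simplex (n - p) X (back_face p (n - p) \<sigma>)"
      using \<sigma> singular_simplex_back_face[OF _ n] by blast
    show "back_face p (n - p) \<sigma> ` standard_simplex (n - p) \<subseteq> V"
      using \<sigma> back_face_image[OF n, of \<sigma>] by blast
  qed
  then show "cup X a b n \<sigma> = 0"
    by (simp add: cup_def)
qed

lemma cup_prod_vanishing_representative:
  assumes "\<And>i. i \<le> k \<Longrightarrow> w i \<in> cocycles X \<and> u i = cclass X (w i) \<and> vanishes_on X (U i) (w i)"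
  shows "\<exists>W \<in> cocycles X. cup_prod X u k = cclass X W \<and> (\<forall>j\<le>k. vanishes_on X (U j) W)"
  using assms
proof (induction k)
  case 0
  then show ?case by auto
next
  case (Suc k)
  then obtain W where W: "W \<in> cocycles X" "cup_prod X u k = cclass X W" "\<forall>j\<le>k. vanishes_on X (U j) W"
    by auto
  have w: "w (Suc k) \<in> cocycles X" "u (Suc k) = cclass X (w (Suc k))"
    "vanishes_on X (U (Suc k)) (w (Suc k))"
    using Suc.prems by auto
  have "cup_prod X u (Suc k) = cclass X (cup X W (w (Suc k)))"
    using W w by (simp add: cup_cohom_cclass)
  moreover have "vanishes_on X (U j) (cup X W (w (Suc k)))" if "j \<le> Suc k" for j
    using that W(3) w(3) vanishes_on_cup_left vanishes_on_cup_right le_Suc_eq by metis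
  ultimately show ?case
    using cup_cocycles[OF W(1) w(1)] by blast
qed

section \<open>Cocycles vanishing on small simplices are coboundaries\<close>

lemma singular_chain_singular_subdivision_power:
  "singular_chain p X c \<Longrightarrow> singular_chain p X ((singular_subdivision p ^^ i) c)"
  by (induction i) (auto simp: singular_chain_singular_subdivision)

lemma chain_boundary_singular_subdivision_power:
  "singular_chain p X c \<Longrightarrow>
   chain_boundary p ((singular_subdivision p ^^ i) c)
     = (singular_subdivision (p - Suc 0) ^^ i) (chain_boundary p c)"
proof (induction i)
  case (Suc i)
  then show ?case
    using chain_boundary_singular_subdivision
      [OF singular_chain_singular_subdivision_power[OF Suc.prems, of i]] by simp
qed simp

primrec max_over_faces :: "(nat \<Rightarrow> ((nat \<Rightarrow> real) \<Rightarrow> 'a) \<Rightarrow> nat) \<Rightarrow> nat \<Rightarrow> ((nat \<Rightarrow> real) \<Rightarrow> 'a) \<Rightarrow> nat"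
  where
  "max_over_faces m 0 \<sigma> = m 0 \<sigma>"
| "max_over_faces m (Suc q) \<sigma> =
     max (m (Suc q) \<sigma>) (Max ((\<lambda>k. max_over_faces m q (singular_face (Suc q) k \<sigma>)) ` {..Suc q}))"

lemma max_over_faces_ge: "m p \<sigma> \<le> max_over_faces m p \<sigma>"
  by (cases p) auto

lemma max_over_faces_face:
  "k \<le> Suc q \<Longrightarrow> max_over_faces m q (singular_face (Suc q) k \<sigma>) \<le> max_over_faces m (Suc q) \<sigma>"
  by (simp add: max.coboundedI2)

definition small_simplices :: "nat \<Rightarrow> 'a topology \<Rightarrow> 'a set set \<Rightarrow> ((nat \<Rightarrow> real) \<Rightarrow> 'a) set" where
  "small_simplices p X \<C> = {\<tau>. singular_simplex p X \<tau> \<and> (\<exists>V\<in>\<C>. \<tau> ` standard_simplex p \<subseteq> V)}"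

lemma subdivision_depth_exists:
  assumes "\<And>V. V \<in> \<C> \<Longrightarrow> openin X V" "topspace X \<subseteq> \<Union>\<C>"
  obtains M where
    "\<And>p \<sigma> m. \<lbrakk>singular_simplex p X \<sigma>; M p \<sigma> \<le> m\<rbrakk>
      \<Longrightarrow> Poly_Mapping.keys ((singular_subdivision p ^^ m) (frag_of \<sigma>)) \<subseteq> small_simplices p X \<C>"
    "\<And>q k \<sigma>. k \<le> Suc q \<Longrightarrow> M q (singular_face (Suc q) k \<sigma>) \<le> M (Suc q) \<sigma>"
proof -
  define fine where "fine p \<sigma> n \<longleftrightarrow>
      (\<forall>m\<ge>n. Poly_Mapping.keys ((singular_subdivision p ^^ m) (frag_of \<sigma>)) \<subseteq> small_simplices p X \<C>)"
    for p \<sigma> n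
  have fine: "\<exists>n. fine p \<sigma> n" if "singular_simplex p X \<sigma>" for p \<sigma>
  proof -
    have \<sigma>: "singular_chain p X (frag_of \<sigma>)"
      using that by (simp add: singular_chain_of)
    then obtain n where "\<And>m \<tau>. \<lbrakk>n \<le> m; \<tau> \<in> Poly_Mapping.keys ((singular_subdivision p ^^ m) (frag_of \<sigma>))\<rbrakk>
                      \<Longrightarrow> \<exists>V \<in> \<C>. \<tau> \<in> standard_simplex p \<rightarrow> V"
      using sufficient_iterated_singular_subdivision_exists[OF assms(1,2)] by blast
    moreover have "Poly_Mapping.keys ((singular_subdivision p ^^ m) (frag_of \<sigma>)) \<subseteq> singular_simplex_set p X"
      for m
      using singular_chain_singular_subdivision_power[OF \<sigma>, of m] by (simp add: singular_chain_def)
    ultimately show ?thesis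
      unfolding fine_def small_simplices_def image_subset_iff_funcset by blast
  qed
  define M where "M = max_over_faces (\<lambda>p \<sigma>. LEAST n. fine p \<sigma> n)"
  show thesis
  proof (rule that)
    fix p \<sigma> m
    assume \<sigma>: "singular_simplex p X \<sigma>" and m: "M p \<sigma> \<le> m"
    have "fine p \<sigma> (LEAST n. fine p \<sigma> n)"
      using fine[OF \<sigma>] by (rule LeastI_ex)
    moreover have "(LEAST n. fine p \<sigma> n) \<le> m"
      using m max_over_faces_ge[of "\<lambda>p \<sigma>. LEAST n. fine p \<sigma> n" p \<sigma>] by (simp add: M_def)
    ultimately show "Poly_Mapping.keys ((singular_subdivision p ^^ m) (frag_of \<sigma>)) \<subseteq> small_simplices p X \<C>"
      unfolding fine_def by blast
  qed (unfold M_def, rule max_over_faces_face)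
qed

lemma eval_cochain_small:
  assumes "\<And>V. V \<in> \<C> \<Longrightarrow> vanishes_on X V c" "Poly_Mapping.keys x \<subseteq> small_simplices p X \<C>"
  shows "eval_cochain c p x = 0"
  using assms by (intro eval_cochain_eq_0) (auto simp: small_simplices_def vanishes_on_def)

locale subdivision_homotopy =
  fixes h :: "nat \<Rightarrow> 'a chain \<Rightarrow> 'a chain"
  assumes h_diff: "\<And>p a b. h p (a - b) = h p a - h p b"
    and singular_chain_h: "\<And>p S c. singular_chain p S c \<Longrightarrow> singular_chain (Suc p) S (h p c)"
    and chain_boundary_h: "\<And>p S c. singular_chain p S c \<Longrightarrow>
        chain_boundary (Suc p) (h p c) + h (p - Suc 0) (chain_boundary p c) = singular_subdivision p c - c"
begin

lemma h_0 [simp]: "h p 0 = 0"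
  using h_diff[of p 0 0] by simp

lemma eval_cocycle_subdivision_power:
  assumes c: "cobd X c = czero" and s: "singular_chain p X s"
  shows "eval_cochain c p ((singular_subdivision p ^^ m) s) = eval_cochain c p s
           + (\<Sum>i<m. eval_cochain c p (h (p - Suc 0) (chain_boundary p ((singular_subdivision p ^^ i) s))))"
proof (induction m)
  case (Suc m)
  let ?s = "(singular_subdivision p ^^ m) s"
  have s': "singular_chain p X ?s"
    using s by (rule singular_chain_singular_subdivision_power)
  have "eval_cochain c p (chain_boundary (Suc p) (h p ?s)) = 0"
    using eval_cochain_cobd[OF singular_chain_h[OF s'], of c] c by (simp add: czero_def eval_cochain_def)
  then have "eval_cochain c p (singular_subdivision p ?s)
             = eval_cochain c p ?s + eval_cochain c p (h (p - Suc 0) (chain_boundary p ?s))"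
    using arg_cong[OF chain_boundary_h[OF s'], of "eval_cochain c p"]
    by (simp add: eval_cochain_add eval_cochain_diff)
  with Suc show ?case
    by simp
qed simp

lemma eval_cochain_h_small:
  assumes vanish: "\<And>V. V \<in> \<C> \<Longrightarrow> vanishes_on X V c"
  shows "Poly_Mapping.keys x \<subseteq> small_simplices q X \<C> \<Longrightarrow> eval_cochain c (Suc q) (h q x) = 0"
proof (induction x rule: frag_induction)
  case (one \<tau>)
  then obtain V where "V \<in> \<C>" "singular_chain q (subtopology X V) (frag_of \<tau>)"
    by (auto simp: small_simplices_def singular_chain_of singular_simplex_subtopology)
  then have "singular_simplex (Suc q) (subtopology X V) \<rho>" if "\<rho> \<in> Poly_Mapping.keys (h q (frag_of \<tau>))" for \<rho>
    using singular_chain_h[of q "subtopology X V" "frag_of \<tau>"] that by (auto simp: singular_chain_def)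
  with \<open>V \<in> \<C>\<close> have "Poly_Mapping.keys (h q (frag_of \<tau>)) \<subseteq> small_simplices (Suc q) X \<C>"
    by (auto simp: small_simplices_def singular_simplex_subtopology)
  with vanish show ?case
    by (rule eval_cochain_small)
qed (simp_all add: h_diff eval_cochain_diff)

lemma eval_cochain_h_boundary_subdivision_power:
  assumes "singular_simplex (Suc q) X \<sigma>"
  shows "eval_cochain c (Suc q) (h q (chain_boundary (Suc q) ((singular_subdivision (Suc q) ^^ i) (frag_of \<sigma>))))
       = (\<Sum>k\<le>Suc q. (-1) ^ k * eval_cochain c (Suc q)
            (h q ((singular_subdivision q ^^ i) (frag_of (singular_face (Suc q) k \<sigma>)))))"
proof -
  let ?E = "\<lambda>x. eval_cochain c (Suc q) (h q ((singular_subdivision q ^^ i) x))"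
  have "chain_boundary (Suc q) ((singular_subdivision (Suc q) ^^ i) (frag_of \<sigma>))
        = (singular_subdivision q ^^ i) (chain_boundary (Suc q) (frag_of \<sigma>))"
    using chain_boundary_singular_subdivision_power[of "Suc q" X "frag_of \<sigma>" i] assms
    by (simp add: singular_chain_of)
  then have "eval_cochain c (Suc q) (h q (chain_boundary (Suc q) ((singular_subdivision (Suc q) ^^ i) (frag_of \<sigma>))))
      = ?E (chain_boundary (Suc q) (frag_of \<sigma>))"
    by simp
  also have "\<dots> = eval_cochain (\<lambda>_ \<rho>. ?E (frag_of \<rho>)) q (chain_boundary (Suc q) (frag_of \<sigma>))"
    by (rule additive_eq_eval_cochain) (simp add: singular_subdivision_power_diff h_diff eval_cochain_diff)
  also have "\<dots> = (\<Sum>k\<le>Suc q. (-1) ^ k * ?E (frag_of (singular_face (Suc q) k \<sigma>)))"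
    by (simp add: chain_boundary_of eval_cochain_sum eval_cochain_cmul del: sum.atMost_Suc)
  finally show ?thesis .
qed

lemma cocycle_eq_minus_sum_subdivision:
  assumes c: "cobd X c = czero" and \<sigma>: "singular_simplex p X \<sigma>"
    and small: "eval_cochain c p ((singular_subdivision p ^^ m) (frag_of \<sigma>)) = 0"
  shows "c p \<sigma> = - (\<Sum>i<m. eval_cochain c p
           (h (p - Suc 0) (chain_boundary p ((singular_subdivision p ^^ i) (frag_of \<sigma>)))))"
proof -
  have "c p \<sigma> + (\<Sum>i<m. eval_cochain c p
          (h (p - Suc 0) (chain_boundary p ((singular_subdivision p ^^ i) (frag_of \<sigma>))))) = 0"
    using eval_cocycle_subdivision_power[OF c, of p "frag_of \<sigma>" m] \<sigma> small
    by (simp add: singular_chain_of)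
  then show ?thesis
    by (simp only: eq_neg_iff_add_eq_0)
qed

(* Telescoping c(sd^M \<sigma>) - c(\<sigma>) = \<Sum>i<M. c(h(\<partial> sd^i \<sigma>)) along the subdivision homotopy,
   with the left term 0 once sd^M \<sigma> is small, exhibits c as minus the coboundary of this
   cochain; the depth M must not increase under passing to faces. *)
definition subdivision_primitive ::
    "'a topology \<Rightarrow> (nat \<Rightarrow> ((nat \<Rightarrow> real) \<Rightarrow> 'a) \<Rightarrow> nat) \<Rightarrow> ('a,'r::comm_ring_1) cochain \<Rightarrow> ('a,'r) cochain"
  where
  "subdivision_primitive X M c q \<tau> = (if singular_simplex q X \<tau>
     then \<Sum>i<M q \<tau>. eval_cochain c (Suc q) (h q ((singular_subdivision q ^^ i) (frag_of \<tau>))) else 0)"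

lemma subdivision_primitive_cochains:
  assumes "c \<in> cochains X"
  shows "subdivision_primitive X M c \<in> cochains X"
proof (rule cochains_degree_shift[OF assms])
  fix n \<tau>
  assume "subdivision_primitive X M c n \<tau> \<noteq> 0"
  then have "(\<Sum>i<M n \<tau>. eval_cochain c (Suc n) (h n ((singular_subdivision n ^^ i) (frag_of \<tau>)))) \<noteq> 0"
    by (simp add: subdivision_primitive_def split: if_splits)
  then obtain i where "eval_cochain c (Suc n) (h n ((singular_subdivision n ^^ i) (frag_of \<tau>))) \<noteq> 0"
    by (meson sum.not_neutral_contains_not_neutral)
  then show "\<exists>\<rho>. c (Suc n) \<rho> \<noteq> 0"
    by (rule eval_cochain_nonzero)
qed (simp add: subdivision_primitive_def)

lemma cocycle_eq_minus_cobd_subdivision_primitive: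
  assumes c: "cobd X c = czero" and vanish: "\<And>V. V \<in> \<C> \<Longrightarrow> vanishes_on X V c"
    and M: "\<And>p \<sigma> m. \<lbrakk>singular_simplex p X \<sigma>; M p \<sigma> \<le> m\<rbrakk>
        \<Longrightarrow> Poly_Mapping.keys ((singular_subdivision p ^^ m) (frag_of \<sigma>)) \<subseteq> small_simplices p X \<C>"
    and M_face: "\<And>q k \<sigma>. k \<le> Suc q \<Longrightarrow> M q (singular_face (Suc q) k \<sigma>) \<le> M (Suc q) \<sigma>"
    and \<sigma>: "singular_simplex p X \<sigma>"
  shows "c p \<sigma> = - cobd X (subdivision_primitive X M c) p \<sigma>"
proof -
  let ?b = "subdivision_primitive X M c"
  let ?E = "\<lambda>i q \<tau>. eval_cochain c (Suc q) (h q ((singular_subdivision q ^^ i) (frag_of \<tau>)))"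
  have "eval_cochain c p ((singular_subdivision p ^^ M p \<sigma>) (frag_of \<sigma>)) = 0"
    using vanish M[OF \<sigma> order_refl] by (rule eval_cochain_small)
  with c \<sigma> have c_sum: "c p \<sigma> = - (\<Sum>i<M p \<sigma>. eval_cochain c p
               (h (p - Suc 0) (chain_boundary p ((singular_subdivision p ^^ i) (frag_of \<sigma>)))))"
    by (rule cocycle_eq_minus_sum_subdivision)
  show ?thesis
  proof (cases p)
    case 0
    then show ?thesis
      using c_sum by (simp add: cobd_def)
  next
    case (Suc q)
    have "c p \<sigma> = - (\<Sum>i<M p \<sigma>. \<Sum>k\<le>Suc q. (-1) ^ k * ?E i q (singular_face (Suc q) k \<sigma>))"
      unfolding c_sum using \<sigma> Suc
      by (simp add: eval_cochain_h_boundary_subdivision_power del: sum.atMost_Suc)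
    also have "\<dots> = - (\<Sum>k\<le>Suc q. (-1) ^ k * (\<Sum>i<M p \<sigma>. ?E i q (singular_face (Suc q) k \<sigma>)))"
      by (simp add: sum_distrib_left del: sum.atMost_Suc) (rule sum.swap)
    also have "\<dots> = - (\<Sum>k\<le>Suc q. (-1) ^ k * ?b q (singular_face (Suc q) k \<sigma>))"
    proof (intro arg_cong[of _ _ uminus] sum.cong refl arg_cong[of _ _ "(*) _"])
      fix k assume "k \<in> {..Suc q}"
      then have le: "M q (singular_face (Suc q) k \<sigma>) \<le> M p \<sigma>"
        and face: "singular_simplex q X (singular_face (Suc q) k \<sigma>)"
        using M_face[of k q \<sigma>] singular_simplex_singular_face[of "Suc q" X \<sigma> k] \<sigma> Suc by simp_all
      have "?E i q (singular_face (Suc q) k \<sigma>) = 0" if "M q (singular_face (Suc q) k \<sigma>) \<le> i" for i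
        using vanish M[OF face that] by (rule eval_cochain_h_small)
      then have "(\<Sum>i<M p \<sigma>. ?E i q (singular_face (Suc q) k \<sigma>))
               = (\<Sum>i<M q (singular_face (Suc q) k \<sigma>). ?E i q (singular_face (Suc q) k \<sigma>))"
        by (intro sum.mono_neutral_right) (use le in auto)
      with face show "(\<Sum>i<M p \<sigma>. ?E i q (singular_face (Suc q) k \<sigma>)) = ?b q (singular_face (Suc q) k \<sigma>)"
        by (simp add: subdivision_primitive_def)
    qed
    also have "\<dots> = - cobd X ?b p \<sigma>"
      using \<sigma> Suc by (simp add: cobd_def del: sum.atMost_Suc)
    finally show ?thesis .
  qed
qed

end

lemma cocycle_small_coboundary:
  fixes c :: "('a,'r::comm_ring_1) cochain"
  assumes c: "c \<in> cocycles X"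
    and opn: "\<And>V. V \<in> \<C> \<Longrightarrow> openin X V" and cov: "topspace X \<subseteq> \<Union>\<C>"
    and vanish: "\<And>V. V \<in> \<C> \<Longrightarrow> vanishes_on X V c"
  shows "c \<in> coboundaries X"
proof -
  obtain M where M: "\<And>p \<sigma> m. \<lbrakk>singular_simplex p X \<sigma>; M p \<sigma> \<le> m\<rbrakk>
        \<Longrightarrow> Poly_Mapping.keys ((singular_subdivision p ^^ m) (frag_of \<sigma>)) \<subseteq> small_simplices p X \<C>"
    and M_face: "\<And>q k \<sigma>. k \<le> Suc q \<Longrightarrow> M q (singular_face (Suc q) k \<sigma>) \<le> M (Suc q) \<sigma>"
    using subdivision_depth_exists[OF opn cov] by blast
  obtain h :: "nat \<Rightarrow> 'a chain \<Rightarrow> 'a chain"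
    where "\<And>p. h p 0 = 0"
      and hdiff: "\<And>p a b. h p (a - b) = h p a - h p b"
      and hsing: "\<And>p S c. singular_chain p S c \<Longrightarrow> singular_chain (Suc p) S (h p c)"
      and hbd: "\<And>p S c. singular_chain p S c \<Longrightarrow>
           chain_boundary (Suc p) (h p c) + h (p - Suc 0) (chain_boundary p c) = singular_subdivision p c - c"
    using chain_homotopic_singular_subdivision by blast
  interpret subdivision_homotopy h
    by (rule subdivision_homotopy.intro[OF hdiff hsing hbd])
  have c_cyc: "cobd X c = czero" and c_coch: "c \<in> cochains X"
    using c by (auto simp: cocycles_def)
  let ?b = "subdivision_primitive X M c"
  have "c = cminus czero (cobd X ?b)"
  proof (intro ext)
    fix n \<sigma>
    show "c n \<sigma> = cminus czero (cobd X ?b) n \<sigma>"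
    proof (cases "singular_simplex n X \<sigma>")
      case True
      have "c n \<sigma> = - cobd X ?b n \<sigma>"
        by (rule cocycle_eq_minus_cobd_subdivision_primitive[where \<C> = \<C> and M = M])
          (fact c_cyc vanish M M_face True)+
      then show ?thesis
        by (simp add: cminus_def czero_def)
    next
      case False
      then show ?thesis
        by (simp add: cochainsD[OF c_coch False] cminus_def czero_def cobd_def)
    qed
  qed
  then have "c = cobd X (cminus czero ?b)"
    by (simp only: cobd_cminus cobd_czero)
  moreover have "cminus czero ?b \<in> cochains X"
    using subdivision_primitive_cochains[OF c_coch] by (simp add: cminus_cochains)
  ultimately show ?thesis
    by (metis coboundaries_cobd)
qed

section \<open>A prism operator by acyclic models\<close>

abbreviation simplex_space :: "nat \<Rightarrow> (nat \<Rightarrow> real) topology" where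
  "simplex_space q \<equiv> subtopology (powertop_real UNIV) (standard_simplex q)"

abbreviation cylinder :: "'a topology \<Rightarrow> (real \<times> 'a) topology" where
  "cylinder X \<equiv> prod_topology (top_of_set {0..1}) X"

abbreviation identity_simplex :: "nat \<Rightarrow> (nat \<Rightarrow> real) \<Rightarrow> (nat \<Rightarrow> real)" where
  "identity_simplex q \<equiv> restrict id (standard_simplex q)"

lemma singular_simplex_identity_simplex: "singular_simplex q (simplex_space q) (identity_simplex q)"
  by (simp add: singular_simplex_def continuous_map_in_subtopology continuous_map_from_subtopology)

lemma contractible_space_simplex_space: "contractible_space (simplex_space q)"
proof -
  define v :: "nat \<Rightarrow> real" where "v = (\<lambda>i. if i = 0 then 1 else 0)"
  define h where "h = (\<lambda>(t::real, x::nat \<Rightarrow> real) i. (1 - t) * x i + t * v i)"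
  have fst: "continuous_map (cylinder X) euclideanreal fst" for X :: "'a topology"
    using continuous_map_fst continuous_map_in_subtopology by blast
  have "continuous_map (cylinder (powertop_real UNIV)) (powertop_real UNIV) h"
    unfolding h_def continuous_map_componentwise_UNIV case_prod_unfold
    by (auto intro!: continuous_intros fst continuous_map_product_projection continuous_map_compose[OF continuous_map_snd])
  then have "continuous_map (cylinder (simplex_space q)) (simplex_space q) h"
    by (auto simp: prod_topology_subtopology continuous_map_in_subtopology h_def v_def convex_standard_simplex
        intro: continuous_map_from_subtopology)
  then have "homotopic_with (\<lambda>x. True) (simplex_space q) (simplex_space q) id (\<lambda>x. v)"
    by (auto simp: homotopic_with_def h_def intro!: exI[of _ h])
  then show ?thesis
    unfolding contractible_space_def by blast
qed

lemma contractible_space_cylinder_simplex: "contractible_space (cylinder (simplex_space q))"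
  by (simp add: contractible_space_prod_topology contractible_space_simplex_space
      is_interval_convex_1 convex_imp_contractible)

lemma contractible_cycle_homologous_constant:
  assumes "contractible_space X" "a \<in> topspace X" "singular_relcycle p X {} c"
  shows "homologous_rel p X {} c (chain_map p (\<lambda>x. a) c)"
proof -
  have "homotopic_with (\<lambda>h. h \<in> {} \<rightarrow> {}) X X id (\<lambda>x. a)"
    using assms(1,2) by (simp add: contractible_space_alt)
  from homotopic_imp_homologous_rel_chain_maps[OF this assms(3)] show ?thesis
    using assms(3) chain_map_ident by (fastforce simp: singular_cycle)
qed

lemma contractible_cycle_boundary:
  assumes "contractible_space X" "singular_relcycle (Suc p) X {} c"
  shows "singular_relboundary (Suc p) X {} c"
proof (cases "topspace X = {}")
  case True
  then show ?thesis
    using assms(2) by (simp add: singular_cycle singular_chain_empty)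
next
  case False
  then obtain a where a: "a \<in> topspace X" by blast
  have "continuous_map X (subtopology X {a}) (\<lambda>x. a)"
    using a by (simp add: continuous_map_in_subtopology)
  then have "singular_relcycle (Suc p) (subtopology X {a}) {} (chain_map (Suc p) (\<lambda>x. a) c)"
    by (rule singular_relcycle_chain_map[OF assms(2)]) auto
  then have "singular_relboundary (Suc p) (subtopology X {a}) {} (chain_map (Suc p) (\<lambda>x. a) c)"
    using a by (subst singular_boundary_eq_cycle_singleton) auto
  then have "singular_relboundary (Suc p) X {} (chain_map (Suc p) (\<lambda>x. a) c)"
    using singular_boundary_mono[of "{a}" "topspace X" _ X] a by (metis empty_subsetI insert_subset subtopology_topspace)
  with contractible_cycle_homologous_constant[OF assms(1) a assms(2)] show ?thesis
    unfolding homologous_rel_def using singular_relboundary_add by fastforce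
qed

(* The junk value 0 for chains that are not boundaries keeps the filler a singular chain. *)
definition boundary_filler :: "nat \<Rightarrow> 'a topology \<Rightarrow> 'a chain \<Rightarrow> 'a chain" where
  "boundary_filler p X c =
     (if singular_relboundary p X {} c
      then SOME d. singular_chain (Suc p) X d \<and> chain_boundary (Suc p) d = c else 0)"

lemma singular_chain_boundary_filler: "singular_chain (Suc p) X (boundary_filler p X c)"
  unfolding boundary_filler_def singular_boundary by (auto intro: someI2_ex)

lemma chain_boundary_boundary_filler:
  "singular_relboundary p X {} c \<Longrightarrow> chain_boundary (Suc p) (boundary_filler p X c) = c"
  unfolding boundary_filler_def singular_boundary by (auto intro: someI2_ex)

definition cylinder_ends :: "nat \<Rightarrow> 'a chain \<Rightarrow> (real \<times> 'a) chain" where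
  "cylinder_ends q c = chain_map q (Pair 1) c - chain_map q (Pair 0) c"

definition extend_prism :: "nat \<Rightarrow> (real \<times> (nat \<Rightarrow> real)) chain \<Rightarrow> 'a chain \<Rightarrow> (real \<times> 'a) chain" where
  "extend_prism q P = frag_extend (\<lambda>\<sigma>. chain_map (Suc q) (map_prod id \<sigma>) P)"

(* Acyclic models: the prism over the identity simplex of \<Delta>^q fills the cycle formed by the two
   ends of the cylinder and the prism over its boundary, which bounds because the cylinder over
   \<Delta>^q is contractible; extend_prism transports it to arbitrary simplices by naturality. *)
primrec model_prism :: "nat \<Rightarrow> (real \<times> (nat \<Rightarrow> real)) chain" where
  "model_prism 0 = boundary_filler 0 (cylinder (simplex_space 0))
     (cylinder_ends 0 (frag_of (identity_simplex 0)))"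
| "model_prism (Suc q) = boundary_filler (Suc q) (cylinder (simplex_space (Suc q)))
     (cylinder_ends (Suc q) (frag_of (identity_simplex (Suc q)))
      - extend_prism q (model_prism q) (chain_boundary (Suc q) (frag_of (identity_simplex (Suc q)))))"

definition cylinder_prism :: "nat \<Rightarrow> 'a chain \<Rightarrow> (real \<times> 'a) chain" where
  "cylinder_prism q = extend_prism q (model_prism q)"

lemma cylinder_prism_of [simp]:
  "cylinder_prism q (frag_of \<sigma>) = chain_map (Suc q) (map_prod id \<sigma>) (model_prism q)"
  by (simp add: cylinder_prism_def extend_prism_def)

lemma cylinder_prism_0 [simp]: "cylinder_prism q 0 = 0"
  by (simp add: cylinder_prism_def extend_prism_def)

lemma cylinder_prism_diff: "cylinder_prism q (a - b) = cylinder_prism q a - cylinder_prism q b"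
  by (simp add: cylinder_prism_def extend_prism_def frag_extend_diff)

lemma singular_chain_model_prism:
  "singular_chain (Suc q) (cylinder (simplex_space q)) (model_prism q)"
  by (cases q) (simp_all add: singular_chain_boundary_filler)

lemma singular_chain_cylinder_prism:
  assumes "singular_chain q X c"
  shows "singular_chain (Suc q) (cylinder X) (cylinder_prism q c)"
  using assms unfolding singular_chain_def
proof (induction c rule: frag_induction)
  case (one \<sigma>)
  then have "continuous_map (cylinder (simplex_space q)) (cylinder X) (map_prod id \<sigma>)"
    by (simp add: map_prod_def continuous_map_prod_top singular_simplex_def)
  from singular_chain_chain_map[OF singular_chain_model_prism this] show ?case
    by (simp add: singular_chain_def)
next
  case (diff a b)
  then show ?case
    by (metis cylinder_prism_diff singular_chain_def singular_chain_diff)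
qed auto

lemma chain_map_cylinder_prism:
  "chain_map (Suc q) (map_prod id g) (cylinder_prism q c) = cylinder_prism q (chain_map q g c)"
  using subset_UNIV
proof (induction c rule: frag_induction)
  case (one \<sigma>)
  have "chain_map (Suc q) (map_prod id g \<circ> map_prod id \<sigma>) (model_prism q)
        = chain_map (Suc q) (map_prod id (simplex_map q g \<sigma>)) (model_prism q)"
    by (rule chain_map_eq[OF singular_chain_model_prism]) (auto simp: simplex_map_def)
  then show ?case
    by (simp only: cylinder_prism_of chain_map_of chain_map_compose comp_apply)
qed (auto simp: cylinder_prism_diff chain_map_diff)

lemma chain_map_cylinder_ends:
  "chain_map q (map_prod id g) (cylinder_ends q c) = cylinder_ends q (chain_map q g c)"
proof -
  have "map_prod id g \<circ> Pair t = Pair t \<circ> g" for t :: real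
    by auto
  then show ?thesis
    by (simp add: cylinder_ends_def chain_map_diff flip: comp_apply[of "chain_map q _" "chain_map q _"] chain_map_compose)
qed

lemma chain_boundary_cylinder_ends:
  "singular_chain q X c \<Longrightarrow> chain_boundary q (cylinder_ends q c) = cylinder_ends (q - 1) (chain_boundary q c)"
  by (simp add: cylinder_ends_def chain_boundary_diff chain_boundary_chain_map)

lemma chain_boundary_cylinder_prism_from_model:
  assumes model: "chain_boundary (Suc q) (model_prism q)
      = cylinder_ends q (frag_of (identity_simplex q))
        - cylinder_prism (q - 1) (chain_boundary q (frag_of (identity_simplex q)))"
    and c: "singular_chain q X c"
  shows "chain_boundary (Suc q) (cylinder_prism q c)
       = cylinder_ends q c - cylinder_prism (q - 1) (chain_boundary q c)"
  using c unfolding singular_chain_def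
proof (induction c rule: frag_induction)
  case (one \<sigma>)
  then have \<sigma>: "singular_simplex q X \<sigma>" by simp
  have \<sigma>\<iota>: "simplex_map q \<sigma> (identity_simplex q) = \<sigma>"
    using singular_simplex_chain_map_id[OF \<sigma>] by (simp add: frag_of_eq)
  have \<iota>: "singular_chain q (simplex_space q) (frag_of (identity_simplex q))"
    by (simp add: singular_chain_of singular_simplex_identity_simplex)
  have faces: "chain_map (q - 1) \<sigma> (chain_boundary q (frag_of (identity_simplex q)))
             = chain_boundary q (frag_of \<sigma>)"
    using chain_boundary_chain_map[OF \<iota>, of \<sigma>] \<sigma>\<iota> by simp
  have "chain_map q (map_prod id \<sigma>) (cylinder_prism (q - 1) (chain_boundary q (frag_of (identity_simplex q))))
      = cylinder_prism (q - 1) (chain_boundary q (frag_of \<sigma>))"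
  proof (cases q)
    case (Suc m)
    then show ?thesis
      using chain_map_cylinder_prism[of m \<sigma>] faces by simp
  qed (simp add: chain_boundary_def)
  then show ?case
    using chain_boundary_chain_map[OF singular_chain_model_prism, of q "map_prod id \<sigma>"]
    by (simp add: model chain_map_diff chain_map_cylinder_ends \<sigma>\<iota>)
next
  case (diff a b)
  then show ?case
    by (simp add: cylinder_prism_diff chain_boundary_diff cylinder_ends_def chain_map_diff)
qed (simp add: cylinder_ends_def)

lemma singular_chain_cylinder_ends:
  "singular_chain q X c \<Longrightarrow> singular_chain q (cylinder X) (cylinder_ends q c)"
  unfolding cylinder_ends_def
  by (intro singular_chain_diff singular_chain_chain_map[where X=X]) (auto intro!: continuous_intros)

lemma chain_map_const_cylinder_ends: "chain_map q (\<lambda>x. a) (cylinder_ends q c) = 0"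
proof -
  have "chain_map q (\<lambda>x. a) (chain_map q (Pair t) c) = chain_map q ((\<lambda>x. a) \<circ> Pair t) c" for t :: real
    by (simp only: chain_map_compose comp_apply)
  moreover have "(\<lambda>x. a) \<circ> Pair t = (\<lambda>x. a)" for t :: real
    by auto
  ultimately show ?thesis
    by (simp add: cylinder_ends_def chain_map_diff del: chain_map_of)
qed

lemma singular_relboundary_cylinder_ends_0:
  "singular_relboundary 0 (cylinder (simplex_space 0)) {} (cylinder_ends 0 (frag_of (identity_simplex 0)))"
proof -
  obtain a where a: "a \<in> topspace (cylinder (simplex_space 0))"
    using nonempty_standard_simplex by fastforce
  have "singular_relcycle 0 (cylinder (simplex_space 0)) {} (cylinder_ends 0 (frag_of (identity_simplex 0)))"
    by (simp add: singular_cycle singular_chain_cylinder_ends singular_chain_of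
        singular_simplex_identity_simplex)
  from contractible_cycle_homologous_constant[OF contractible_space_cylinder_simplex a this] show ?thesis
    by (simp add: homologous_rel_def chain_map_const_cylinder_ends)
qed

lemma chain_boundary_model_prism:
  "chain_boundary (Suc q) (model_prism q)
     = cylinder_ends q (frag_of (identity_simplex q))
       - cylinder_prism (q - 1) (chain_boundary q (frag_of (identity_simplex q)))"
proof (induction q)
  case 0
  from chain_boundary_boundary_filler[OF singular_relboundary_cylinder_ends_0] show ?case
    by (simp only: model_prism.simps chain_boundary_0 cylinder_prism_0 diff_zero)
next
  case (Suc q)
  let ?X = "cylinder (simplex_space (Suc q))" and ?\<iota> = "frag_of (identity_simplex (Suc q))"
  let ?z = "cylinder_ends (Suc q) ?\<iota> - cylinder_prism q (chain_boundary (Suc q) ?\<iota>)"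
  have \<iota>: "singular_chain (Suc q) (simplex_space (Suc q)) ?\<iota>"
    by (simp add: singular_chain_of singular_simplex_identity_simplex)
  have "chain_boundary (Suc q) ?z = 0"
    using chain_boundary_cylinder_prism_from_model[OF Suc singular_chain_boundary_alt[OF \<iota>]]
    by (simp add: chain_boundary_diff chain_boundary_cylinder_ends[OF \<iota>] chain_boundary_boundary_alt[OF \<iota>])
  then have "singular_relcycle (Suc q) ?X {} ?z"
    by (simp add: singular_cycle singular_chain_diff singular_chain_cylinder_ends[OF \<iota>]
        singular_chain_cylinder_prism singular_chain_boundary_alt[OF \<iota>])
  then have "singular_relboundary (Suc q) ?X {} ?z"
    by (rule contractible_cycle_boundary[OF contractible_space_cylinder_simplex])
  from chain_boundary_boundary_filler[OF this] show ?case
    by (simp only: model_prism.simps cylinder_prism_def diff_Suc_1)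
qed


lemma chain_boundary_cylinder_prism:
  "singular_chain q X c \<Longrightarrow>
   chain_boundary (Suc q) (cylinder_prism q c) = cylinder_ends q c - cylinder_prism (q - 1) (chain_boundary q c)"
  by (rule chain_boundary_cylinder_prism_from_model[OF chain_boundary_model_prism])

definition homotopy_prism :: "(real \<times> 'a \<Rightarrow> 'b) \<Rightarrow> nat \<Rightarrow> 'a chain \<Rightarrow> 'b chain" where
  "homotopy_prism h q c = chain_map (Suc q) h (cylinder_prism q c)"

lemma homotopy_prism_diff: "homotopy_prism h q (a - b) = homotopy_prism h q a - homotopy_prism h q b"
  by (simp add: homotopy_prism_def cylinder_prism_diff chain_map_diff)

lemma singular_chain_homotopy_prism:
  "continuous_map (cylinder X) Y h \<Longrightarrow> singular_chain q X c
    \<Longrightarrow> singular_chain (Suc q) Y (homotopy_prism h q c)"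
  unfolding homotopy_prism_def by (metis singular_chain_chain_map singular_chain_cylinder_prism)

lemma chain_boundary_homotopy_prism:
  assumes "singular_chain q X c"
  shows "chain_boundary (Suc q) (homotopy_prism h q c)
       = chain_map q (h \<circ> Pair 1) c - chain_map q (h \<circ> Pair 0) c - homotopy_prism h (q - 1) (chain_boundary q c)"
proof -
  have "chain_map q h (cylinder_prism (q - 1) (chain_boundary q c)) = homotopy_prism h (q - 1) (chain_boundary q c)"
    by (cases q) (simp_all add: homotopy_prism_def)
  then show ?thesis
    using chain_boundary_chain_map[OF singular_chain_cylinder_prism[OF assms], of h]
    by (simp add: homotopy_prism_def chain_boundary_cylinder_prism[OF assms] cylinder_ends_def
        chain_map_diff chain_map_compose)
qed

section \<open>Homotopic maps induce cochain-homotopic pullbacks\<close>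

lemma pullback_cochains: "z \<in> cochains Y \<Longrightarrow> pullback X f z \<in> cochains X"
  by (rule cochainsI[where D = "{n. \<exists>\<sigma>. z n \<sigma> \<noteq> 0}"])
    (auto simp: pullback_def finite_cochain_degrees split: if_splits)

lemma cobd_pullback:
  assumes "continuous_map X Y f"
  shows "cobd X (pullback X f z) = pullback X f (cobd Y z)"
proof (intro ext)
  fix n \<sigma>
  show "cobd X (pullback X f z) n \<sigma> = pullback X f (cobd Y z) n \<sigma>"
  proof (cases "singular_simplex n X \<sigma> \<and> 0 < n")
    case True
    then obtain m where m: "n = Suc m"
      using gr0_conv_Suc by blast
    have \<sigma>: "singular_chain (Suc m) X (frag_of \<sigma>)"
      using True m by (simp add: singular_chain_of)
    have "cobd X (pullback X f z) n \<sigma> = eval_cochain z m (chain_map m f (chain_boundary (Suc m) (frag_of \<sigma>)))"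
      using True m singular_chain_boundary_alt[OF \<sigma>]
      by (simp add: cobd_Suc_eq_eval_cochain eval_cochain_pullback del: chain_boundary_of)
    also have "\<dots> = eval_cochain (cobd Y z) (Suc m) (chain_map (Suc m) f (frag_of \<sigma>))"
      using chain_boundary_chain_map[OF \<sigma>, of f] singular_chain_chain_map[OF \<sigma> assms]
      by (simp add: eval_cochain_cobd del: chain_map_of chain_boundary_of)
    finally show ?thesis
      using True m by (simp add: pullback_def)
  qed (auto simp: cobd_def pullback_def)
qed

lemma pullback_czero [simp]: "pullback X f czero = czero"
  by (simp add: pullback_def czero_def)

lemma pullback_cocycles:
  assumes "continuous_map X Y f" "z \<in> cocycles Y"
  shows "pullback X f z \<in> cocycles X"
proof -
  have "z \<in> cochains Y" "cobd Y z = czero"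
    using assms(2) by (simp_all add: cocycles_def)
  then show ?thesis
    by (simp add: cocycles_def pullback_cochains cobd_pullback[OF assms(1)])
qed

definition prism_cochain :: "'a topology \<Rightarrow> (real \<times> 'a \<Rightarrow> 'b) \<Rightarrow> ('b,'r::comm_ring_1) cochain \<Rightarrow> ('a,'r) cochain"
  where
  "prism_cochain S h z n \<sigma> =
     (if singular_simplex n S \<sigma> then eval_cochain z (Suc n) (homotopy_prism h n (frag_of \<sigma>)) else 0)"

lemma prism_cochain_cochains:
  "z \<in> cochains Y \<Longrightarrow> prism_cochain (subtopology X V) h z \<in> cochains X"
  by (rule cochains_degree_shift)
    (auto simp: prism_cochain_def singular_simplex_subtopology split: if_splits dest: eval_cochain_nonzero)

lemma cobd_prism_cochain:
  assumes \<sigma>: "singular_simplex n (subtopology X V) \<sigma>"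
  shows "cobd X (prism_cochain (subtopology X V) h z) n \<sigma>
       = eval_cochain z n (homotopy_prism h (n - 1) (chain_boundary n (frag_of \<sigma>)))"
proof (cases n)
  case (Suc m)
  have faces: "singular_simplex m (subtopology X V) (singular_face (Suc m) k \<sigma>)" if "k \<le> Suc m" for k
    using singular_simplex_singular_face[of "Suc m" "subtopology X V" \<sigma> k] \<sigma> that Suc by simp
  have "eval_cochain z n (homotopy_prism h (n - 1) (chain_boundary n (frag_of \<sigma>)))
        = eval_cochain (\<lambda>_ \<rho>. eval_cochain z (Suc m) (homotopy_prism h m (frag_of \<rho>))) m
            (chain_boundary (Suc m) (frag_of \<sigma>))"
    unfolding Suc diff_Suc_1
    by (rule additive_eq_eval_cochain) (simp add: homotopy_prism_diff eval_cochain_diff)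
  also have "\<dots> = (\<Sum>k\<le>Suc m. (-1) ^ k * prism_cochain (subtopology X V) h z m (singular_face (Suc m) k \<sigma>))"
    by (simp add: chain_boundary_of eval_cochain_sum eval_cochain_cmul prism_cochain_def faces
        del: sum.atMost_Suc)
  finally show ?thesis
    using \<sigma> Suc by (simp add: cobd_def singular_simplex_subtopology del: sum.atMost_Suc)
qed (simp add: cobd_def homotopy_prism_def)

lemma homotopic_pullback_cobd:
  fixes z :: "('b,'r::comm_ring_1) cochain"
  assumes hom: "homotopic_with (\<lambda>h. True) (subtopology X V) Y f g" and z: "z \<in> cocycles Y"
  obtains \<kappa> where "\<kappa> \<in> cochains X"
    "\<And>n \<sigma>. singular_simplex n (subtopology X V) \<sigma> \<Longrightarrow>
       pullback X g z n \<sigma> - pullback X f z n \<sigma> = cobd X \<kappa> n \<sigma>"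
proof -
  obtain h where h: "continuous_map (cylinder (subtopology X V)) Y h"
    and h0: "\<And>x. h (0, x) = f x" and h1: "\<And>x. h (1, x) = g x"
    using hom by (auto simp: homotopic_with_def)
  have z_coch: "z \<in> cochains Y" and z_cyc: "cobd Y z = czero"
    using z by (auto simp: cocycles_def)
  have "pullback X g z n \<sigma> - pullback X f z n \<sigma> = cobd X (prism_cochain (subtopology X V) h z) n \<sigma>"
    if \<sigma>: "singular_simplex n (subtopology X V) \<sigma>" for n \<sigma>
  proof -
    have \<sigma>': "singular_chain n (subtopology X V) (frag_of \<sigma>)"
      using \<sigma> by (simp add: singular_chain_of)
    have "h \<circ> Pair 1 = g" "h \<circ> Pair 0 = f"
      using h0 h1 by auto
    moreover have "eval_cochain z n (chain_boundary (Suc n) (homotopy_prism h n (frag_of \<sigma>))) = 0"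
      using eval_cochain_cobd[OF singular_chain_homotopy_prism[OF h \<sigma>'], of z] z_cyc
      by (simp add: czero_def eval_cochain_def)
    ultimately show ?thesis
      using \<sigma> chain_boundary_homotopy_prism[OF \<sigma>', of h]
      by (simp add: cobd_prism_cochain eval_cochain_diff pullback_def singular_simplex_subtopology
          del: chain_boundary_of)
  qed
  with prism_cochain_cochains[OF z_coch] show thesis
    using that by blast
qed

lemma pullback_diff_vanishing_representative:
  fixes z :: "('b,'r::comm_ring_1) cochain"
  assumes f: "continuous_map X Y f" and g: "continuous_map X Y g"
    and hom: "homotopic_with (\<lambda>h. True) (subtopology X V) Y f g" and z: "z \<in> cocycles Y"
  shows "\<exists>w \<in> cocycles X. cclass X (cminus (pullback X f z) (pullback X g z)) = cclass X w
           \<and> vanishes_on X V w"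
proof -
  obtain \<kappa> where \<kappa>: "\<kappa> \<in> cochains X"
    and \<kappa>V: "\<And>n \<sigma>. singular_simplex n (subtopology X V) \<sigma> \<Longrightarrow>
       pullback X g z n \<sigma> - pullback X f z n \<sigma> = cobd X \<kappa> n \<sigma>"
    using homotopic_pullback_cobd[OF hom z] by blast
  define d where "d = cminus (pullback X f z) (pullback X g z)"
  define w where "w = cminus d (cobd X (cminus czero \<kappa>))"
  have d: "d \<in> cocycles X"
    unfolding d_def using pullback_cocycles[OF f z] pullback_cocycles[OF g z] by (rule cocycles_cminus)
  have \<delta>\<kappa>: "cobd X (cminus czero \<kappa>) \<in> coboundaries X"
    using coboundaries_cobd[OF cminus_cochains[OF czero_cochains \<kappa>]] .
  have w: "w \<in> cocycles X"
    unfolding w_def using d coboundaries_cocycles[OF \<delta>\<kappa>] by (rule cocycles_cminus)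
  have "cclass X d = cclass X w"
    by (rule cclass_eq[OF d w]) (simp add: w_def cminus_cancel_left \<delta>\<kappa>)
  moreover have "vanishes_on X V w"
    unfolding vanishes_on_def
  proof (intro allI impI)
    fix n \<sigma> assume "singular_simplex n X \<sigma> \<and> \<sigma> ` standard_simplex n \<subseteq> V"
    then have "singular_simplex n (subtopology X V) \<sigma>"
      by (simp add: singular_simplex_subtopology)
    from \<kappa>V[OF this] show "w n \<sigma> = 0"
      by (simp only: w_def d_def cobd_cminus cobd_czero) (simp add: cminus_def czero_def algebra_simps)
  qed
  ultimately show ?thesis
    using w unfolding d_def by blast
qed

lemma Jfg_vanishing_representative:
  assumes f: "continuous_map X Y f" and g: "continuous_map X Y g"
    and hom: "homotopic_with (\<lambda>h. True) (subtopology X V) Y f g"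
    and u: "u \<in> Jfg X Y f g"
  shows "\<exists>w \<in> cocycles X. u = cclass X w \<and> vanishes_on X V w"
proof -
  obtain v where v: "v \<in> cohomology Y"
    and u_eq: "u = cclass X (cminus (rep (cohom_map X f v)) (rep (cohom_map X g v)))"
    using u unfolding Jfg_def by blast
  define z where "z = rep v"
  have z: "z \<in> cocycles Y"
    using v unfolding cohomology_def z_def by (auto dest: rep_cclass(1) simp: cclass_def)
  have A: "rep (cohom_map X f v) \<in> cocycles X"
      "cminus (rep (cohom_map X f v)) (pullback X f z) \<in> coboundaries X"
    using rep_cclass[OF pullback_cocycles[OF f z]] by (simp_all add: cohom_map_def z_def)
  have B: "rep (cohom_map X g v) \<in> cocycles X"
      "cminus (rep (cohom_map X g v)) (pullback X g z) \<in> coboundaries X"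
    using rep_cclass[OF pullback_cocycles[OF g z]] by (simp_all add: cohom_map_def z_def)
  have "u = cclass X (cminus (pullback X f z) (pullback X g z))"
    unfolding u_eq
  proof (rule cclass_eq)
    show "cminus (rep (cohom_map X f v)) (rep (cohom_map X g v)) \<in> cocycles X"
      using A(1) B(1) by (rule cocycles_cminus)
    show "cminus (pullback X f z) (pullback X g z) \<in> cocycles X"
      using pullback_cocycles[OF f z] pullback_cocycles[OF g z] by (rule cocycles_cminus)
    show "cminus (cminus (rep (cohom_map X f v)) (rep (cohom_map X g v)))
            (cminus (pullback X f z) (pullback X g z)) \<in> coboundaries X"
      using coboundaries_cminus[OF A(2) B(2)] by (simp add: cminus_def algebra_simps)
  qed
  with pullback_diff_vanishing_representative[OF f g hom z] show ?thesis
    by simp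
qed

lemma good_cover_cup_prod_Jfg:
  assumes "continuous_map X Y f" "continuous_map X Y g" "good_cover X Y f g n"
    and "\<forall>i\<le>n. u i \<in> Jfg X Y f g"
  shows "cup_prod X u n = cohom_zero X"
proof -
  obtain U where opn: "\<forall>j\<le>n. openin X (U j)" and cov: "(\<Union>j\<le>n. U j) = topspace X"
      and hom: "\<forall>j\<le>n. homotopic_with (\<lambda>h. True) (subtopology X (U j)) Y f g"
    using assms(3) unfolding good_cover_def by blast
  have "\<forall>i\<in>{..n}. \<exists>w. w \<in> cocycles X \<and> u i = cclass X w \<and> vanishes_on X (U i) w"
    using Jfg_vanishing_representative[OF assms(1,2)] assms(4) hom by blast
  then obtain w where "\<forall>i\<in>{..n}. w i \<in> cocycles X \<and> u i = cclass X (w i) \<and> vanishes_on X (U i) (w i)"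
    by (rule bchoice[elim_format]) blast
  then obtain W where "W \<in> cocycles X" "cup_prod X u n = cclass X W" "\<forall>j\<le>n. vanishes_on X (U j) W"
    using cup_prod_vanishing_representative[of n w X u U] by auto
  moreover have "W \<in> coboundaries X"
    by (rule cocycle_small_coboundary[where \<C> = "U ` {..n}"]) (use calculation opn cov in auto)
  ultimately show ?thesis
    by (simp add: cclass_coboundary)
qed

theorem theorem5p2:
  fixes X :: "'a topology" and Y :: "'b topology" and f g :: "'a \<Rightarrow> 'b"
  assumes "continuous_map X Y f" and "continuous_map X Y g"
  shows "lcp X (Jfg X Y f g :: ('a, 'r::comm_ring_1) cochain set set) \<le> hdist X Y f g"
proof (cases "\<exists>n. good_cover X Y f g n")
  case True
  let ?J = "Jfg X Y f g :: ('a, 'r) cochain set set"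
  define n where "n = (LEAST n. good_cover X Y f g n)"
  have "good_cover X Y f g n"
    unfolding n_def using True by (rule LeastI_ex)
  then have vanish: "\<forall>u. (\<forall>i\<le>n. u i \<in> ?J) \<longrightarrow> cup_prod X u n = cohom_zero X"
    using good_cover_cup_prod_Jfg[OF assms] by blast
  then have "\<exists>k. \<forall>u. (\<forall>i\<le>k. u i \<in> ?J) \<longrightarrow> cup_prod X u k = cohom_zero X"
    by blast
  with vanish have "lcp X ?J \<le> enat n"
    unfolding lcp_def by (simp add: Least_le)
  then show ?thesis
    using True by (simp add: hdist_def n_def)
qed (simp add: hdist_def)

end
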